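(* Let $G$ be an Erdős–Rényi random graph $G(n,p)$ with $p=\omega\bigl(\sqrt{\log n/n}\bigr)$. Then with high probability $\rho^*_G=(1+o(1))\frac{2}{3p-p^2}$.
   Context: $G(n,p)$: each of the $\binom n2$ possible edges on $V=\{v_1,\dots,v_n\}$ is present independently with probability $p$, present edges having weight $1$ and absent ones weight $0$. "With high probability" means with probability larger than $1-n^{-\varepsilon}$ for some constant $\varepsilon>0$. An HC-tree for $V$ is a rooted tree with leaf set $V$. For distinct $i,j,k$: $\{i,j|k\}$ holds in $T$ if $\mathrm{LCA}(v_i,v_j)$ is a proper descendant of $\mathrm{LCA}(v_i,v_j,v_k)$; $\{i|j|k\}$ holds if $\mathrm{LCA}(v_i,v_j)=\mathrm{LCA}(v_j,v_k)=\mathrm{LCA}(v_i,v_j,v_k)$. Triplet cost $c_T(i,j,k)$: $w_{ik}+w_{jk}$ if $\{i,j|k\}$; $w_{ij}+w_{jk}$ if $\{i,k|j\}$; $w_{ij}+w_{ik}$ if $\{j,k|i\}$; $w_{ij}+w_{jk}+w_{ik}$ if $\{i|j|k\}$. $\mathrm{TC}_G(T)=\sum c_T(i,j,k)$, $\mathrm{BC}(G)=\sum\min\{w_{ij}+w_{ik},w_{ij}+w_{jk},w_{ik}+w_{jk}\}$ over unordered triples of distinct indices; $\rho_G(T)=\mathrm{TC}_G(T)/\mathrm{BC}(G)$ (with $0/0=1$, $x/0=+\infty$ for $x>0$), $\rho^*_G=\min_T\rho_G(T)$. *)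

theory Defs
  imports Complex_Main "HOL-Library.Extended_Real"
begin

text \<open>Vertices are 0,...,n-1 (standing for v_1,...,v_n). An edge is a 2-element set.\<close>

definition all_pairs :: "nat \<Rightarrow> nat set set" where
  "all_pairs n = {{i, j} | i j. i < j \<and> j < n}"

text \<open>A sample of G(n,p) is a set E of edges; the weight function is the indicator.\<close>

definition wt :: "nat set set \<Rightarrow> nat \<Rightarrow> nat \<Rightarrow> real" where
  "wt E i j = (if {i, j} \<in> E then 1 else 0)"

definition gnp_prob :: "nat \<Rightarrow> real \<Rightarrow> (nat set set \<Rightarrow> bool) \<Rightarrow> real" where
  "gnp_prob n p A =
     (\<Sum>E\<in>Pow (all_pairs n).
        if A E then p ^ card E * (1 - p) ^ (card (all_pairs n) - card E) else 0)"

datatype hct = Leaf nat | Node "hct list"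

fun leaves_list :: "hct \<Rightarrow> nat list" where
  "leaves_list (Leaf v) = [v]"
| "leaves_list (Node ts) = concat (map leaves_list ts)"

fun wf_hct :: "hct \<Rightarrow> bool" where
  "wf_hct (Leaf v) = True"
| "wf_hct (Node ts) = (ts \<noteq> [] \<and> (\<forall>t\<in>set ts. wf_hct t))"

fun subtrees :: "hct \<Rightarrow> hct set" where
  "subtrees (Leaf v) = {Leaf v}"
| "subtrees (Node ts) = insert (Node ts) (\<Union>t\<in>set ts. subtrees t)"

definition leaves :: "hct \<Rightarrow> nat set" where
  "leaves t = set (leaves_list t)"

text \<open>A rooted tree whose leaves are exactly the labels in V, each occurring once
  (every internal node has at least one child, so all leaves are labelled).\<close>

definition is_hc_tree :: "nat set \<Rightarrow> hct \<Rightarrow> bool" where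
  "is_hc_tree V T \<longleftrightarrow> wf_hct T \<and> distinct (leaves_list T) \<and> leaves T = V"

definition lca :: "hct \<Rightarrow> nat set \<Rightarrow> hct" where
  "lca T S = (THE u. u \<in> subtrees T \<and> S \<subseteq> leaves u \<and>
      (\<forall>u'\<in>subtrees T. S \<subseteq> leaves u' \<longrightarrow> u \<in> subtrees u'))"

definition proper_desc :: "hct \<Rightarrow> hct \<Rightarrow> bool" where
  "proper_desc u u' \<longleftrightarrow> u \<in> subtrees u' \<and> u \<noteq> u'"

definition split3 :: "hct \<Rightarrow> nat \<Rightarrow> nat \<Rightarrow> nat \<Rightarrow> bool" where
  "split3 T i j k \<longleftrightarrow> proper_desc (lca T {i, j}) (lca T {i, j, k})"

definition star3 :: "hct \<Rightarrow> nat \<Rightarrow> nat \<Rightarrow> nat \<Rightarrow> bool" where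
  "star3 T i j k \<longleftrightarrow> lca T {i, j} = lca T {i, j, k} \<and> lca T {j, k} = lca T {i, j, k}"

definition triplet_cost :: "(nat \<Rightarrow> nat \<Rightarrow> real) \<Rightarrow> hct \<Rightarrow> nat \<Rightarrow> nat \<Rightarrow> nat \<Rightarrow> real" where
  "triplet_cost w T i j k =
     (if split3 T i j k then w i k + w j k
      else if split3 T i k j then w i j + w j k
      else if split3 T j k i then w i j + w i k
      else if star3 T i j k then w i j + w j k + w i k
      else undefined)"

definition triples :: "nat \<Rightarrow> (nat \<times> nat \<times> nat) set" where
  "triples n = {(i, j, k). i < j \<and> j < k \<and> k < n}"

definition TC :: "nat \<Rightarrow> (nat \<Rightarrow> nat \<Rightarrow> real) \<Rightarrow> hct \<Rightarrow> real" where
  "TC n w T = (\<Sum>(i, j, k)\<in>triples n. triplet_cost w T i j k)"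

definition BC :: "nat \<Rightarrow> (nat \<Rightarrow> nat \<Rightarrow> real) \<Rightarrow> real" where
  "BC n w = (\<Sum>(i, j, k)\<in>triples n.
      min (w i j + w i k) (min (w i j + w j k) (w i k + w j k)))"

text \<open>rho_G(T) with the conventions 0/0 = 1 and x/0 = +infinity for x > 0.\<close>
definition rho :: "nat \<Rightarrow> (nat \<Rightarrow> nat \<Rightarrow> real) \<Rightarrow> hct \<Rightarrow> ereal" where
  "rho n w T = (if BC n w = 0 then (if TC n w T = 0 then 1 else \<infinity>)
                else ereal (TC n w T / BC n w))"

text \<open>rho*_G: the minimum over all HC-trees for V = {0..<n} (stated as infimum; the
  minimum is attained since only finitely many values occur).\<close>
definition rho_star :: "nat \<Rightarrow> (nat \<Rightarrow> nat \<Rightarrow> real) \<Rightarrow> ereal" where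
  "rho_star n w = (INF T\<in>{T. is_hc_tree {0..<n} T}. rho n w T)"

end

theory Submission
  imports Defs "HOL-Analysis.Convex"
begin

text \<open>For a graph, \<open>BC\<close> charges every pair \<open>ab\<close> once for each common neighbour, with weight
  \<open>2/3\<close> if \<open>ab\<close> is itself an edge. In \<open>G(n,p)\<close> the number of edges and all codegrees are
  concentrated, so \<open>BC \<approx> (3 - p) p\<^sup>2 binom(n,3)\<close>.
  The cost of a tree is \<open>n - 2\<close> times the number of edges minus the weight of the pairs \<open>ab\<close>
  split off from a third vertex \<open>c\<close>. For fixed \<open>c\<close> these pairs lie inside the classes of a
  partition of the other vertices, and in \<open>G(n,p)\<close> no set of at least \<open>s\<^sub>0\<close> vertices is much
  denser than \<open>p\<close>; hence the subtracted weight is at most about \<open>p binom(n,3)\<close> and every tree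
  costs at least about \<open>2p binom(n,3)\<close>. The caterpillar, whose cost is a weighted edge count,
  costs at most about as much. Each concentration statement is a Chernoff bound failing with
  probability \<open>O(n\<^sup>-\<^sup>2)\<close>, the one on dense sets after a union bound over all large vertex sets.\<close>

section \<open>Random subsets of a finite set\<close>

definition subset_weight :: "real \<Rightarrow> 'a set \<Rightarrow> 'a set \<Rightarrow> real" where
  "subset_weight p P E = p ^ card E * (1 - p) ^ (card P - card E)"

definition expect :: "real \<Rightarrow> 'a set \<Rightarrow> ('a set \<Rightarrow> real) \<Rightarrow> real" where
  "expect p P f = (\<Sum>E\<in>Pow P. subset_weight p P E * f E)"

definition prob :: "real \<Rightarrow> 'a set \<Rightarrow> ('a set \<Rightarrow> bool) \<Rightarrow> real" where
  "prob p P A = expect p P (\<lambda>E. of_bool (A E))"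

lemma sum_Pow_insert:
  assumes "finite P" "a \<notin> P"
  shows "(\<Sum>E\<in>Pow (insert a P). g E) = (\<Sum>E\<in>Pow P. g E) + (\<Sum>E\<in>Pow P. g (insert a E))"
proof -
  have "inj_on (insert a) (Pow P)"
    using assms(2) by (intro inj_onI) (metis Diff_insert_absorb PowD subsetD)
  moreover have "Pow P \<inter> insert a ` Pow P = {}" using assms(2) by auto
  ultimately show ?thesis using assms(1) by (simp add: Pow_insert sum.union_disjoint sum.reindex)
qed

lemma expect_empty [simp]: "expect p {} f = f {}"
  by (simp add: expect_def subset_weight_def)

lemma expect_insert:
  assumes "finite P" "a \<notin> P"
  shows "expect p (insert a P) f = p * expect p P (\<lambda>E. f (insert a E)) + (1 - p) * expect p P f"
proof -
  have out: "subset_weight p (insert a P) E = (1 - p) * subset_weight p P E"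
    and into: "subset_weight p (insert a P) (insert a E) = p * subset_weight p P E"
    if "E \<subseteq> P" for E
  proof -
    have "finite E" "a \<notin> E" "card E \<le> card P"
      using that assms finite_subset card_mono by blast+
    then show "subset_weight p (insert a P) E = (1 - p) * subset_weight p P E"
      and "subset_weight p (insert a P) (insert a E) = p * subset_weight p P E"
      using assms by (simp_all add: subset_weight_def Suc_diff_le)
  qed
  show ?thesis
    unfolding expect_def sum_Pow_insert[OF assms] sum_distrib_left
    by (simp add: out into mult.assoc add.commute)
qed

lemma expect_cong: "(\<And>E. E \<subseteq> P \<Longrightarrow> f E = g E) \<Longrightarrow> expect p P f = expect p P g"
  unfolding expect_def by (intro sum.cong) auto

lemma expect_add: "expect p P (\<lambda>E. f E + g E) = expect p P f + expect p P g"
  unfolding expect_def by (simp add: distrib_left sum.distrib)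

lemma expect_cmult: "expect p P (\<lambda>E. c * f E) = c * expect p P f"
  unfolding expect_def by (simp add: sum_distrib_left mult.left_commute)

lemma expect_mono:
  "0 \<le> p \<Longrightarrow> p \<le> 1 \<Longrightarrow> (\<And>E. E \<subseteq> P \<Longrightarrow> f E \<le> g E) \<Longrightarrow> expect p P f \<le> expect p P g"
  unfolding expect_def subset_weight_def by (intro sum_mono mult_left_mono) auto

lemma expect_const: "finite P \<Longrightarrow> expect p P (\<lambda>E. c) = c"
  by (induction P rule: finite_induct) (simp_all add: expect_insert algebra_simps)

lemma expect_nonneg:
  "finite P \<Longrightarrow> 0 \<le> p \<Longrightarrow> p \<le> 1 \<Longrightarrow> (\<And>E. E \<subseteq> P \<Longrightarrow> 0 \<le> f E) \<Longrightarrow> 0 \<le> expect p P f"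
  using expect_mono[of p P "\<lambda>E. 0" f] by (simp add: expect_const)

definition depends_only_on :: "('a set \<Rightarrow> 'b) \<Rightarrow> 'a set \<Rightarrow> bool" where
  "depends_only_on f A \<longleftrightarrow> (\<forall>E. f E = f (E \<inter> A))"

lemma depends_only_on_insert: "depends_only_on f A \<Longrightarrow> a \<notin> A \<Longrightarrow> f (insert a E) = f E"
  unfolding depends_only_on_def by (metis Int_insert_left)

lemma depends_only_on_shift: "depends_only_on f A \<Longrightarrow> depends_only_on (\<lambda>E. f (insert a E)) A"
  unfolding depends_only_on_def by (metis Int_insert_left inf.idem inf_assoc)

lemma depends_only_on_mono: "depends_only_on f A \<Longrightarrow> A \<subseteq> A' \<Longrightarrow> depends_only_on f A'"
  unfolding depends_only_on_def by (metis inf.absorb_iff2 inf_assoc)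

lemma depends_only_on_comp: "depends_only_on f A \<Longrightarrow> depends_only_on (\<lambda>E. h (f E)) A"
  unfolding depends_only_on_def by metis

lemma depends_only_on_mem: "depends_only_on (\<lambda>E. of_bool (e \<in> E)) {e}"
  unfolding depends_only_on_def by auto

lemma depends_only_on_prod:
  assumes "\<And>k. k \<in> K \<Longrightarrow> depends_only_on (f k) (D k)"
  shows "depends_only_on (\<lambda>E. \<Prod>k\<in>K. f k E) (\<Union>k\<in>K. D k)"
proof -
  have "depends_only_on (f k) (\<Union>k\<in>K. D k)" if "k \<in> K" for k
    using depends_only_on_mono[OF assms[OF that]] that by blast
  then show ?thesis unfolding depends_only_on_def by (metis (no_types, lifting) prod.cong)
qed

lemma expect_mult_indep:
  assumes "finite P" "depends_only_on f A" "depends_only_on g B" "A \<inter> B = {}"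
  shows "expect p P (\<lambda>E. f E * g E) = expect p P f * expect p P g"
  using assms
proof (induction P arbitrary: f g A B rule: finite_induct)
  case (insert a P)
  have step: "expect p (insert a P) (\<lambda>E. f E * g E) = expect p (insert a P) f * expect p (insert a P) g"
    if f: "depends_only_on f A" and g: "depends_only_on g B" and AB: "A \<inter> B = {}" "a \<notin> B"
    for f g A B
  proof -
    have g_ins: "g (insert a E) = g E" for E using depends_only_on_insert[OF g AB(2)] .
    have "expect p P (\<lambda>E. f (insert a E) * g E) = expect p P (\<lambda>E. f (insert a E)) * expect p P g"
      using insert.IH[OF depends_only_on_shift[OF f] g AB(1)] .
    moreover have "expect p P (\<lambda>E. f E * g E) = expect p P f * expect p P g"
      using insert.IH[OF f g AB(1)] .
    ultimately show ?thesis using insert.hyps by (simp add: expect_insert g_ins algebra_simps)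
  qed
  show ?case
  proof (cases "a \<in> B")
    case True
    then have "a \<notin> A" using insert.prems(3) by blast
    then show ?thesis
      using step[OF insert.prems(2,1)] insert.prems(3) by (simp add: Int_commute mult.commute)
  qed (use step[OF insert.prems] in simp)
qed simp

lemma expect_prod_indep:
  assumes "finite P" "finite K" "\<And>k. k \<in> K \<Longrightarrow> depends_only_on (f k) (D k)"
    "\<And>k k'. k \<in> K \<Longrightarrow> k' \<in> K \<Longrightarrow> k \<noteq> k' \<Longrightarrow> D k \<inter> D k' = {}"
  shows "expect p P (\<lambda>E. \<Prod>k\<in>K. f k E) = (\<Prod>k\<in>K. expect p P (f k))"
  using assms(2-4)
proof (induction K rule: finite_induct)
  case (insert k0 K)
  have "depends_only_on (\<lambda>E. \<Prod>k\<in>K. f k E) (\<Union>k\<in>K. D k)"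
    by (rule depends_only_on_prod) (use insert.prems(1) in blast)
  moreover have "D k0 \<inter> (\<Union>k\<in>K. D k) = {}" using insert.prems(2) insert.hyps(2) by fastforce
  ultimately have "expect p P (\<lambda>E. f k0 E * (\<Prod>k\<in>K. f k E)) =
      expect p P (f k0) * expect p P (\<lambda>E. \<Prod>k\<in>K. f k E)"
    using expect_mult_indep[OF assms(1) insert.prems(1)[OF insertI1]] by blast
  with insert show ?case by simp
qed (simp add: assms(1) expect_const)

lemma expect_mem:
  assumes "finite P" "e \<in> P"
  shows "expect p P (\<lambda>E. of_bool (e \<in> E)) = p"
proof -
  have "expect p (P - {e}) (\<lambda>E. of_bool (e \<in> E)) = expect p (P - {e}) (\<lambda>E. 0)"
    by (rule expect_cong) auto
  then show ?thesis
    using expect_insert[of "P - {e}" e p "\<lambda>E. of_bool (e \<in> E)"] assms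
    by (simp add: insert_absorb expect_const)
qed

lemma prob_mono:
  "0 \<le> p \<Longrightarrow> p \<le> 1 \<Longrightarrow> (\<And>E. E \<subseteq> P \<Longrightarrow> A E \<Longrightarrow> B E) \<Longrightarrow> prob p P A \<le> prob p P B"
  unfolding prob_def by (rule expect_mono) auto

lemma prob_compl:
  assumes "finite P"
  shows "prob p P (\<lambda>E. \<not> A E) = 1 - prob p P A"
proof -
  have "prob p P (\<lambda>E. \<not> A E) + prob p P A = expect p P (\<lambda>E. 1)"
    unfolding prob_def expect_add[symmetric] by (rule expect_cong) simp
  then show ?thesis using assms by (simp add: expect_const)
qed

lemma prob_disj_le:
  assumes "0 \<le> p" "p \<le> 1" "prob p P A \<le> a" "prob p P B \<le> b"
  shows "prob p P (\<lambda>E. A E \<or> B E) \<le> a + b"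
proof -
  have "prob p P (\<lambda>E. A E \<or> B E) \<le> prob p P A + prob p P B"
    unfolding prob_def expect_add[symmetric] using assms(1,2) by (rule expect_mono) auto
  with assms(3,4) show ?thesis by linarith
qed

lemma prob_ex:
  assumes "0 \<le> p" "p \<le> 1" "finite I"
  shows "prob p P (\<lambda>E. \<exists>i\<in>I. A i E) \<le> (\<Sum>i\<in>I. prob p P (A i))"
  using assms(3)
proof (induction I rule: finite_induct)
  case (insert i I)
  then show ?case using prob_disj_le[OF assms(1,2) order_refl insert.IH, of "A i"] by simp
qed (simp add: prob_def expect_def)

lemma markov:
  assumes "0 \<le> p" "p \<le> 1" "0 < a" "\<And>E. E \<subseteq> P \<Longrightarrow> 0 \<le> f E"
    "\<And>E. E \<subseteq> P \<Longrightarrow> A E \<Longrightarrow> a \<le> f E"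
  shows "prob p P A \<le> expect p P f / a"
proof -
  have "prob p P A \<le> expect p P (\<lambda>E. f E / a)"
    unfolding prob_def using assms by (intro expect_mono) auto
  also have "\<dots> = expect p P f / a"
    using expect_cmult[of p P "1 / a" f] by simp
  finally show ?thesis .
qed

section \<open>Chernoff bounds\<close>

lemma exp_mult_le_convex:
  fixes x l :: real
  assumes "0 \<le> x" "x \<le> 1"
  shows "exp (l * x) \<le> 1 + x * (exp l - 1)"
  using convex_onD[OF exp_convex, of x 0 l] assms by (simp add: algebra_simps)

lemma exp_minus_le:
  fixes l :: real
  assumes "0 \<le> l"
  shows "exp (- l) \<le> 1 - l + l\<^sup>2"
proof -
  have pos: "0 \<le> 1 - l + l\<^sup>2"
    using zero_le_power2[of "l - 1/2"] by (simp add: power2_eq_square algebra_simps)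
  have "1 \<le> (1 - l + l\<^sup>2) * (1 + l)"
    using assms by (simp add: algebra_simps power2_eq_square)
  also have "\<dots> \<le> (1 - l + l\<^sup>2) * exp l"
    using exp_ge_add_one_self[of l] pos by (rule mult_left_mono)
  finally show ?thesis by (simp add: exp_minus field_simps)
qed

locale indep_family =
  fixes p :: real and P :: "'a set" and K :: "'b set"
    and X :: "'b \<Rightarrow> 'a set \<Rightarrow> real" and D :: "'b \<Rightarrow> 'a set"
  assumes finite_P: "finite P" and finite_K: "finite K" and p_nonneg: "0 \<le> p" and p_le_1: "p \<le> 1"
    and depends: "\<And>k. k \<in> K \<Longrightarrow> depends_only_on (X k) (D k)"
    and disjoint: "\<And>k k'. k \<in> K \<Longrightarrow> k' \<in> K \<Longrightarrow> k \<noteq> k' \<Longrightarrow> D k \<inter> D k' = {}"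
    and range_X: "\<And>k E. k \<in> K \<Longrightarrow> 0 \<le> X k E \<and> X k E \<le> 1"
begin

definition mean :: real where
  "mean = (\<Sum>k\<in>K. expect p P (X k))"

lemma mean_nonneg: "0 \<le> mean"
  unfolding mean_def using range_X by (intro sum_nonneg expect_nonneg finite_P p_nonneg p_le_1) auto

lemma expect_exp_sum_le: "expect p P (\<lambda>E. exp (l * (\<Sum>k\<in>K. X k E))) \<le> exp (mean * (exp l - 1))"
proof -
  have "expect p P (\<lambda>E. exp (l * (\<Sum>k\<in>K. X k E))) = (\<Prod>k\<in>K. expect p P (\<lambda>E. exp (l * X k E)))"
    unfolding sum_distrib_left exp_sum[OF finite_K]
    by (rule expect_prod_indep[OF finite_P finite_K, where D = D])
      (use disjoint in \<open>auto intro: depends_only_on_comp depends\<close>)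
  also have "\<dots> \<le> (\<Prod>k\<in>K. exp (expect p P (X k) * (exp l - 1)))"
  proof (rule prod_mono)
    fix k assume k: "k \<in> K"
    have "expect p P (\<lambda>E. exp (l * X k E)) \<le> expect p P (\<lambda>E. 1 + X k E * (exp l - 1))"
      using range_X[OF k] by (intro expect_mono[OF p_nonneg p_le_1] exp_mult_le_convex) auto
    also have "\<dots> = 1 + expect p P (X k) * (exp l - 1)"
      using expect_cmult[of p P "exp l - 1" "X k"] finite_P
      by (simp add: expect_add expect_const mult.commute)
    also have "\<dots> \<le> exp (expect p P (X k) * (exp l - 1))" by (rule exp_ge_add_one_self)
    finally show "0 \<le> expect p P (\<lambda>E. exp (l * X k E)) \<and>
        expect p P (\<lambda>E. exp (l * X k E)) \<le> exp (expect p P (X k) * (exp l - 1))"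
      by (simp add: expect_nonneg finite_P p_nonneg p_le_1)
  qed
  also have "\<dots> = exp (mean * (exp l - 1))"
    unfolding mean_def by (simp add: exp_sum[OF finite_K] sum_distrib_right)
  finally show ?thesis .
qed

lemma chernoff_upper:
  assumes "0 < \<eta>" "\<eta> \<le> 2"
  shows "prob p P (\<lambda>E. (1 + \<eta>) * mean \<le> (\<Sum>k\<in>K. X k E)) \<le> exp (- (\<eta>\<^sup>2 * mean / 4))"
proof -
  define l where "l = \<eta> / 2"
  have l: "0 < l" "l \<le> 1" using assms by (auto simp: l_def)
  have "prob p P (\<lambda>E. (1 + \<eta>) * mean \<le> (\<Sum>k\<in>K. X k E)) \<le>
      expect p P (\<lambda>E. exp (l * (\<Sum>k\<in>K. X k E))) / exp (l * ((1 + \<eta>) * mean))"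
    by (rule markov[OF p_nonneg p_le_1]) (use l in auto)
  also have "\<dots> \<le> exp (mean * (exp l - 1)) / exp (l * ((1 + \<eta>) * mean))"
    by (intro divide_right_mono expect_exp_sum_le) simp
  also have "\<dots> = exp (mean * (exp l - 1) - l * ((1 + \<eta>) * mean))"
    by (rule exp_diff[symmetric])
  also have "\<dots> \<le> exp (mean * (l + l\<^sup>2) - l * ((1 + \<eta>) * mean))"
    using exp_bound[of l] l mean_nonneg by (intro exp_mono diff_right_mono mult_left_mono) auto
  also have "mean * (l + l\<^sup>2) - l * ((1 + \<eta>) * mean) = - (\<eta>\<^sup>2 * mean / 4)"
    by (simp add: l_def algebra_simps power2_eq_square)
  finally show ?thesis .
qed

lemma chernoff_lower:
  assumes "0 < \<eta>" "\<eta> \<le> 2"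
  shows "prob p P (\<lambda>E. (\<Sum>k\<in>K. X k E) \<le> (1 - \<eta>) * mean) \<le> exp (- (\<eta>\<^sup>2 * mean / 4))"
proof -
  define l where "l = \<eta> / 2"
  have l: "0 < l" "l \<le> 1" using assms by (auto simp: l_def)
  have "prob p P (\<lambda>E. (\<Sum>k\<in>K. X k E) \<le> (1 - \<eta>) * mean) \<le>
      expect p P (\<lambda>E. exp (- l * (\<Sum>k\<in>K. X k E))) / exp (- l * ((1 - \<eta>) * mean))"
    by (rule markov[OF p_nonneg p_le_1]) (use l in auto)
  also have "\<dots> \<le> exp (mean * (exp (- l) - 1)) / exp (- l * ((1 - \<eta>) * mean))"
    by (intro divide_right_mono expect_exp_sum_le) simp
  also have "\<dots> = exp (mean * (exp (- l) - 1) - (- l) * ((1 - \<eta>) * mean))"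
    by (rule exp_diff[symmetric])
  also have "\<dots> \<le> exp (mean * (- l + l\<^sup>2) - (- l) * ((1 - \<eta>) * mean))"
    using exp_minus_le[of l] l mean_nonneg by (intro exp_mono diff_right_mono mult_left_mono) auto
  also have "mean * (- l + l\<^sup>2) - (- l) * ((1 - \<eta>) * mean) = - (\<eta>\<^sup>2 * mean / 4)"
    by (simp add: l_def algebra_simps power2_eq_square)
  finally show ?thesis .
qed

end

section \<open>Counting pairs and triples\<close>

definition pairs :: "nat \<Rightarrow> (nat \<times> nat) set" where
  "pairs n = {(a, b). a < b \<and> b < n}"

definition pairs_in :: "nat set \<Rightarrow> (nat \<times> nat) set" where
  "pairs_in S = {(a, b). a < b \<and> a \<in> S \<and> b \<in> S}"

lemma pairs_eq_pairs_in: "pairs n = pairs_in {0..<n}"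
  by (auto simp: pairs_def pairs_in_def)

lemma pairs_in_subset_pairs: "S \<subseteq> {0..<n} \<Longrightarrow> pairs_in S \<subseteq> pairs n"
  by (auto simp: pairs_def pairs_in_def)

lemma finite_pairs_in [simp]: "finite S \<Longrightarrow> finite (pairs_in S)"
  by (rule finite_subset[of _ "S \<times> S"]) (auto simp: pairs_in_def)

lemma finite_pairs [simp]: "finite (pairs n)"
  by (simp add: pairs_eq_pairs_in)

lemma finite_triples [simp]: "finite (triples n)"
  by (rule finite_subset[of _ "{0..<n} \<times> {0..<n} \<times> {0..<n}"]) (auto simp: triples_def)

lemma card_pairs_in:
  assumes "finite S"
  shows "2 * card (pairs_in S) + card S = card S * card S"
proof -
  have "S \<times> S = pairs_in S \<union> prod.swap ` pairs_in S \<union> (\<lambda>a. (a, a)) ` S"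
    by (auto simp: pairs_in_def image_iff)
  moreover have "(pairs_in S \<union> prod.swap ` pairs_in S) \<inter> (\<lambda>a. (a, a)) ` S = {}"
    and "pairs_in S \<inter> prod.swap ` pairs_in S = {}"
    by (auto simp: pairs_in_def)
  moreover have "card (prod.swap ` pairs_in S) = card (pairs_in S)"
    by (rule card_image) (auto simp: inj_on_def)
  moreover have "card ((\<lambda>a. (a, a)) ` S) = card S"
    by (rule card_image) (auto simp: inj_on_def)
  ultimately show ?thesis
    using assms by (simp add: card_cartesian_product[symmetric] card_Un_disjoint)
qed

lemma card_pairs: "real (card (pairs n)) = real n * (real n - 1) / 2"
proof -
  have "real (2 * card (pairs n) + n) = real (n * n)"
    using card_pairs_in[of "{0..<n}"] by (simp add: pairs_eq_pairs_in)
  then show ?thesis by (simp add: algebra_simps)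
qed

lemma Sigma_pairs_eq_triple_images:
  "(SIGMA (a, b):pairs n. {0..<n} - {a, b}) =
     (\<lambda>(i, j, k). ((i, j), k)) ` triples n \<union> (\<lambda>(i, j, k). ((i, k), j)) ` triples n \<union>
     (\<lambda>(i, j, k). ((j, k), i)) ` triples n"
proof (intro equalityI subsetI)
  fix x assume x_in: "x \<in> (SIGMA (a, b):pairs n. {0..<n} - {a, b})"
  obtain a b c where x: "x = ((a, b), c)" by (metis prod.collapse)
  have abc: "a < b" "b < n" "c < n" "c \<noteq> a" "c \<noteq> b" using x_in by (auto simp: x pairs_def)
  consider "b < c" | "a < c" "c < b" | "c < a" using abc(4,5) by linarith
  then show "x \<in> (\<lambda>(i, j, k). ((i, j), k)) ` triples n \<union> (\<lambda>(i, j, k). ((i, k), j)) ` triples n \<union>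
      (\<lambda>(i, j, k). ((j, k), i)) ` triples n"
  proof cases
    case 1
    then have "(a, b, c) \<in> triples n" using abc by (simp add: triples_def)
    then show ?thesis unfolding x by (intro UnI1 rev_image_eqI) auto
  next
    case 2
    then have "(a, c, b) \<in> triples n" using abc by (simp add: triples_def)
    then show ?thesis unfolding x by (intro UnI1 UnI2 rev_image_eqI) auto
  next
    case 3
    then have "(c, a, b) \<in> triples n" using abc by (simp add: triples_def)
    then show ?thesis unfolding x by (intro UnI2 rev_image_eqI) auto
  qed
qed (auto simp: pairs_def triples_def)

lemma sum_triples_as_pairs:
  "(\<Sum>(i, j, k)\<in>triples n. F i j k + F i k j + F j k i) =
   (\<Sum>(a, b)\<in>pairs n. \<Sum>c\<in>{0..<n} - {a, b}. (F a b c :: real))"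
proof -
  define h1 where "h1 = (\<lambda>(i::nat, j::nat, k::nat). ((i, j), k))"
  define h2 where "h2 = (\<lambda>(i::nat, j::nat, k::nat). ((i, k), j))"
  define h3 where "h3 = (\<lambda>(i::nat, j::nat, k::nat). ((j, k), i))"
  define g where "g = (\<lambda>((a, b), c). F a b c)"
  have inj: "inj_on h1 (triples n)" "inj_on h2 (triples n)" "inj_on h3 (triples n)"
    by (auto simp: inj_on_def h1_def h2_def h3_def)
  have disj: "(h1 ` triples n \<union> h2 ` triples n) \<inter> h3 ` triples n = {}"
    "h1 ` triples n \<inter> h2 ` triples n = {}"
    by (auto simp: triples_def h1_def h2_def h3_def)
  have "(\<Sum>(a, b)\<in>pairs n. \<Sum>c\<in>{0..<n} - {a, b}. F a b c) = (\<Sum>x\<in>(SIGMA (a, b):pairs n. {0..<n} - {a, b}). g x)"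
    unfolding g_def by (subst sum.Sigma[symmetric]) (auto simp: case_prod_beta)
  also have "\<dots> = (\<Sum>t\<in>triples n. g (h1 t)) + (\<Sum>t\<in>triples n. g (h2 t)) + (\<Sum>t\<in>triples n. g (h3 t))"
    unfolding Sigma_pairs_eq_triple_images h1_def[symmetric] h2_def[symmetric] h3_def[symmetric]
    using inj disj by (simp add: sum.union_disjoint sum.reindex)
  also have "\<dots> = (\<Sum>(i, j, k)\<in>triples n. F i j k + F i k j + F j k i)"
    by (simp add: sum.distrib[symmetric] g_def h1_def h2_def h3_def case_prod_beta)
  finally show ?thesis by simp
qed

lemma card_triples: "3 * real (card (triples n)) = (real n - 2) * real (card (pairs n))"
proof -
  have "card ({0..<n} - {a, b}) = n - 2" "2 \<le> n" if "(a, b) \<in> pairs n" for a b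
    using that by (auto simp: pairs_def card_Diff_subset)
  then have "(\<Sum>(a, b)\<in>pairs n. \<Sum>c\<in>{0..<n} - {a, b}. 1::real) = (\<Sum>x\<in>pairs n. real n - 2)"
    by (intro sum.cong) (auto simp: of_nat_diff)
  then show ?thesis
    using sum_triples_as_pairs[where F = "\<lambda>a b c. 1" and n = n] by (simp add: case_prod_beta mult.commute)
qed

lemma card_triples_ge:
  assumes "7 \<le> n"
  shows "real n ^ 3 / 12 \<le> real (card (triples n))"
proof -
  have "0 \<le> (real n - 6) * real n" using assms by (intro mult_nonneg_nonneg) auto
  then have "real n * real n \<le> 2 * ((real n - 1) * (real n - 2))" by (simp add: algebra_simps)
  then have "real n * (real n * real n) \<le> real n * (2 * ((real n - 1) * (real n - 2)))"
    by (rule mult_left_mono) simp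
  moreover have "real (card (triples n)) = real n * ((real n - 1) * (real n - 2)) / 6"
    using card_triples[of n] card_pairs[of n] by (simp add: algebra_simps)
  ultimately show ?thesis by (simp add: power3_eq_cube)
qed

lemma pairs_in_quotient:
  assumes "equiv U r"
  shows "{(a, b) \<in> pairs_in U. (a, b) \<in> r} = (\<Union>y\<in>U // r. pairs_in y)"
proof (intro set_eqI iffI)
  fix x assume "x \<in> {(a, b) \<in> pairs_in U. (a, b) \<in> r}"
  then obtain a b where x: "x = (a, b)" "a < b" "a \<in> U" "b \<in> U" "(a, b) \<in> r"
    by (auto simp: pairs_in_def)
  then have "r `` {a} \<in> U // r" "a \<in> r `` {a}" "b \<in> r `` {a}"
    using assms by (auto simp: quotientI equiv_def refl_on_def)
  then show "x \<in> (\<Union>y\<in>U // r. pairs_in y)" using x by (auto simp: pairs_in_def)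
next
  fix x assume "x \<in> (\<Union>y\<in>U // r. pairs_in y)"
  then obtain y a b where y: "y \<in> U // r" and x: "x = (a, b)" "a < b" "a \<in> y" "b \<in> y"
    by (auto simp: pairs_in_def)
  have "y \<subseteq> U" using in_quotient_imp_subset[OF assms y] .
  moreover have "(a, b) \<in> r" using in_quotient_imp_in_rel[OF assms y] x by blast
  ultimately show "x \<in> {(a, b) \<in> pairs_in U. (a, b) \<in> r}"
    using x by (auto simp: pairs_in_def)
qed

lemma sum_card_quotient:
  assumes "equiv U r" "finite U"
  shows "(\<Sum>y\<in>U // r. card y) = card U"
proof -
  have "finite y" if "y \<in> U // r" for y
    using in_quotient_imp_subset[OF assms(1) that] assms(2) finite_subset by blast
  then have "card (\<Union>(U // r)) = (\<Sum>y\<in>U // r. card y)"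
    using quotient_disj[OF assms(1)]
    by (intro card_Union_disjoint) (auto simp: pairwise_def disjnt_def)
  then show ?thesis using Union_quotient[OF assms(1)] by simp
qed

lemma sum_pairs_in_le_card:
  fixes w :: "nat \<Rightarrow> nat \<Rightarrow> real"
  assumes "finite S" "\<And>a b. w a b \<le> 1"
  shows "(\<Sum>(a, b)\<in>pairs_in S. w a b) \<le> real (card S) * real (card S)"
proof -
  have "(\<Sum>(a, b)\<in>pairs_in S. w a b) \<le> real (card (pairs_in S))"
    using sum_mono[of "pairs_in S" "\<lambda>(a, b). w a b" "\<lambda>_. 1"] assms(2) by (simp add: case_prod_beta)
  also have "\<dots> \<le> real (card S) * real (card S)"
    using card_pairs_in[OF assms(1)] by (simp flip: of_nat_mult)
  finally show ?thesis .
qed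

text \<open>A class \<open>y\<close> with fewer than \<open>s\<^sub>0\<close> elements has at most \<open>|y|\<^sup>2 < s\<^sub>0 |y|\<close> pairs.\<close>

lemma sum_pairs_in_classes_le:
  fixes w :: "nat \<Rightarrow> nat \<Rightarrow> real" and B :: real
  assumes r: "equiv U r" and U: "finite U"
    and dense: "\<And>S. S \<subseteq> U \<Longrightarrow> s\<^sub>0 \<le> card S \<Longrightarrow> (\<Sum>(a, b)\<in>pairs_in S. w a b) \<le> B * card (pairs_in S)"
    and B: "0 \<le> B" and w: "\<And>a b. w a b \<le> 1"
  shows "(\<Sum>(a, b)\<in>{(a, b) \<in> pairs_in U. (a, b) \<in> r}. w a b)
      \<le> B * card {(a, b) \<in> pairs_in U. (a, b) \<in> r} + s\<^sub>0 * card U"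
proof -
  have sub: "y \<subseteq> U" "finite y" if "y \<in> U // r" for y
    using in_quotient_imp_subset[OF r that] U finite_subset by auto
  have fin: "finite (U // r)"
    using U r by (intro finite_quotient) (auto simp: equiv_def refl_on_def)
  have disj: "pairs_in y \<inter> pairs_in y' = {}" if "y \<in> U // r" "y' \<in> U // r" "y \<noteq> y'" for y y'
    using quotient_disj[OF r that(1,2)] that(3) by (auto simp: pairs_in_def)
  have per_class: "(\<Sum>(a, b)\<in>pairs_in y. w a b) \<le> B * card (pairs_in y) + s\<^sub>0 * card y"
    if "y \<in> U // r" for y
  proof (cases "s\<^sub>0 \<le> card y")
    case True
    then show ?thesis using dense[OF sub(1)[OF that]] by (simp add: add_increasing2)
  next
    case False
    have "(\<Sum>(a, b)\<in>pairs_in y. w a b) \<le> real (card y) * real (card y)"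
      using sum_pairs_in_le_card[OF sub(2)[OF that] w] .
    also have "\<dots> \<le> s\<^sub>0 * card y"
      using False by (simp flip: of_nat_mult)
    finally show ?thesis using B by (simp add: add_increasing)
  qed
  have "(\<Sum>(a, b)\<in>{(a, b) \<in> pairs_in U. (a, b) \<in> r}. w a b) = (\<Sum>y\<in>U // r. \<Sum>(a, b)\<in>pairs_in y. w a b)"
    unfolding pairs_in_quotient[OF r] using sub disj by (intro sum.UNION_disjoint fin) auto
  also have "\<dots> \<le> (\<Sum>y\<in>U // r. B * card (pairs_in y) + s\<^sub>0 * card y)"
    by (rule sum_mono) (rule per_class)
  also have "\<dots> = B * card {(a, b) \<in> pairs_in U. (a, b) \<in> r} + s\<^sub>0 * card U"
    unfolding pairs_in_quotient[OF r] sum.distrib sum_distrib_left[symmetric]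
      sum_card_quotient[OF r U, symmetric]
    using sub disj by (simp add: card_UN_disjoint fin sum_distrib_left)
  finally show ?thesis .
qed

section \<open>Hierarchical clustering trees\<close>

lemma subtrees_refl [simp]: "t \<in> subtrees t"
  by (cases t) auto

lemma leaves_Leaf [simp]: "leaves (Leaf v) = {v}"
  by (simp add: leaves_def)

lemma leaves_Node: "leaves (Node ts) = (\<Union>t\<in>set ts. leaves t)"
  by (simp add: leaves_def)

lemma leaves_subtree: "u \<in> subtrees t \<Longrightarrow> leaves u \<subseteq> leaves t"
  by (induction t rule: subtrees.induct) (auto simp: leaves_Node)

lemma size_subtree: "u \<in> subtrees t \<Longrightarrow> size u \<le> size t"
proof (induction t rule: subtrees.induct)
  case (2 ts)
  show ?case
  proof (cases "u = Node ts")
    case False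
    then obtain t where t: "t \<in> set ts" "u \<in> subtrees t" using "2.prems" by auto
    then have "size u \<le> size t" using "2.IH" by blast
    also have "size t \<le> size_list size ts" using t(1) by (rule size_list_estimation') simp
    finally show ?thesis by simp
  qed simp
qed simp

lemma size_subtree_less: "u \<in> subtrees t \<Longrightarrow> u \<noteq> t \<Longrightarrow> size u < size t"
proof (cases t)
  case (Node ts)
  assume "u \<in> subtrees t" "u \<noteq> t"
  then obtain t' where t': "t' \<in> set ts" "u \<in> subtrees t'" using Node by auto
  then have "size u \<le> size t'" by (simp add: size_subtree)
  also have "size t' \<le> size_list size ts" using t'(1) by (rule size_list_estimation') simp
  finally show ?thesis using Node by simp
qed simp

lemma subtrees_antisym: "u \<in> subtrees t \<Longrightarrow> t \<in> subtrees u \<Longrightarrow> u = t"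
  using size_subtree size_subtree_less by fastforce

lemma distinct_concat_map_member: "distinct (concat (map f ts)) \<Longrightarrow> t \<in> set ts \<Longrightarrow> distinct (f t)"
  by (induction ts) auto

lemma distinct_concat_map_disjoint:
  "distinct (concat (map f ts)) \<Longrightarrow> t1 \<in> set ts \<Longrightarrow> t2 \<in> set ts \<Longrightarrow> t1 \<noteq> t2 \<Longrightarrow>
    set (f t1) \<inter> set (f t2) = {}"
  by (induction ts) auto

lemma leaves_children_disjoint:
  "distinct (leaves_list (Node ts)) \<Longrightarrow> t1 \<in> set ts \<Longrightarrow> t2 \<in> set ts \<Longrightarrow> t1 \<noteq> t2 \<Longrightarrow>
    leaves t1 \<inter> leaves t2 = {}"
  using distinct_concat_map_disjoint[of leaves_list ts t1 t2] by (simp add: leaves_def)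

lemma subtrees_laminar:
  "distinct (leaves_list t) \<Longrightarrow> u \<in> subtrees t \<Longrightarrow> v \<in> subtrees t \<Longrightarrow>
    u \<in> subtrees v \<or> v \<in> subtrees u \<or> leaves u \<inter> leaves v = {}"
proof (induction t arbitrary: u v rule: subtrees.induct)
  case (2 ts)
  show ?case
  proof (cases "u = Node ts \<or> v = Node ts")
    case False
    then obtain t1 t2 where t: "t1 \<in> set ts" "u \<in> subtrees t1" "t2 \<in> set ts" "v \<in> subtrees t2"
      using "2.prems" by auto
    show ?thesis
    proof (cases "t1 = t2")
      case True
      have "distinct (leaves_list t1)"
        using distinct_concat_map_member[of leaves_list ts t1] "2.prems"(1) t(1) by simp
      then show ?thesis using "2.IH"[OF t(1) _ t(2)] t True by blast
    next
      case False
      then have "leaves t1 \<inter> leaves t2 = {}"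
        using leaves_children_disjoint "2.prems"(1) t(1,3) by blast
      then show ?thesis using t leaves_subtree by blast
    qed
  qed (use "2.prems" in auto)
qed simp

definition is_lca :: "hct \<Rightarrow> nat set \<Rightarrow> hct \<Rightarrow> bool" where
  "is_lca T S u \<longleftrightarrow> u \<in> subtrees T \<and> S \<subseteq> leaves u \<and>
      (\<forall>u'\<in>subtrees T. S \<subseteq> leaves u' \<longrightarrow> u \<in> subtrees u')"

lemma lca_exists:
  "distinct (leaves_list t) \<Longrightarrow> S \<noteq> {} \<Longrightarrow> S \<subseteq> leaves t \<Longrightarrow> \<exists>u. is_lca t S u"
proof (induction t rule: subtrees.induct)
  case (1 x)
  then show ?case by (auto simp: is_lca_def)
next
  case (2 ts)
  show ?case
  proof (cases "\<exists>t\<in>set ts. S \<subseteq> leaves t")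
    case True
    then obtain t where t: "t \<in> set ts" "S \<subseteq> leaves t" by blast
    have "distinct (leaves_list t)"
      using distinct_concat_map_member[of leaves_list ts t] "2.prems"(1) t(1) by simp
    then obtain u where u: "is_lca t S u" using "2.IH"[OF t(1) _ "2.prems"(2) t(2)] by blast
    have "u \<in> subtrees u'" if u': "u' \<in> subtrees (Node ts)" "S \<subseteq> leaves u'" for u'
    proof (cases "u' = Node ts")
      case False
      then obtain t' where t': "t' \<in> set ts" "u' \<in> subtrees t'" using u' by auto
      have "t' = t"
      proof (rule ccontr)
        assume "t' \<noteq> t"
        then have "leaves t' \<inter> leaves t = {}" using leaves_children_disjoint "2.prems"(1) t(1) t'(1) by blast
        then show False using leaves_subtree[OF t'(2)] u'(2) t(2) "2.prems"(2) by blast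
      qed
      then show ?thesis using u t' u' by (auto simp: is_lca_def)
    qed (use u t(1) in \<open>auto simp: is_lca_def\<close>)
    then have "is_lca (Node ts) S u" using u t(1) by (auto simp: is_lca_def)
    then show ?thesis by blast
  next
    case False
    have "Node ts \<in> subtrees u'" if "u' \<in> subtrees (Node ts)" "S \<subseteq> leaves u'" for u'
      using that False leaves_subtree by (cases "u' = Node ts") fastforce+
    then have "is_lca (Node ts) S (Node ts)" using "2.prems"(3) by (auto simp: is_lca_def)
    then show ?thesis by blast
  qed
qed

lemma is_lca_unique: "is_lca T S u \<Longrightarrow> is_lca T S v \<Longrightarrow> u = v"
  unfolding is_lca_def by (meson subtrees_antisym)

lemma lca_is_lca:
  assumes "distinct (leaves_list T)" "S \<noteq> {}" "S \<subseteq> leaves T"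
  shows "is_lca T S (lca T S)"
proof -
  obtain u where u: "is_lca T S u" using lca_exists[OF assms] by blast
  have "lca T S = u" unfolding lca_def
    by (rule the_equality) (use u is_lca_unique in \<open>auto simp: is_lca_def\<close>)
  then show ?thesis using u by simp
qed

definition cluster :: "hct \<Rightarrow> nat set \<Rightarrow> nat set" where
  "cluster T S = leaves (lca T S)"

locale hc_tree =
  fixes V :: "nat set" and T :: hct
  assumes is_hc_tree: "is_hc_tree V T"
begin

lemma is_lca_lca: "S \<noteq> {} \<Longrightarrow> S \<subseteq> V \<Longrightarrow> is_lca T S (lca T S)"
  using lca_is_lca is_hc_tree by (simp add: is_hc_tree_def)

lemma lca_in_subtrees: "S \<noteq> {} \<Longrightarrow> S \<subseteq> V \<Longrightarrow> lca T S \<in> subtrees T"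
  using is_lca_lca by (simp add: is_lca_def)

lemma subset_cluster: "S \<noteq> {} \<Longrightarrow> S \<subseteq> V \<Longrightarrow> S \<subseteq> cluster T S"
  using is_lca_lca by (simp add: is_lca_def cluster_def)

lemma lca_below:
  "S \<noteq> {} \<Longrightarrow> S \<subseteq> V \<Longrightarrow> u \<in> subtrees T \<Longrightarrow> S \<subseteq> leaves u \<Longrightarrow> lca T S \<in> subtrees u"
  using is_lca_lca by (simp add: is_lca_def)

lemma cluster_mono:
  assumes "S\<^sub>1 \<noteq> {}" "S\<^sub>1 \<subseteq> V" "S\<^sub>2 \<noteq> {}" "S\<^sub>2 \<subseteq> V" "S\<^sub>1 \<subseteq> cluster T S\<^sub>2"
  shows "cluster T S\<^sub>1 \<subseteq> cluster T S\<^sub>2"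
proof -
  have "lca T S\<^sub>1 \<in> subtrees (lca T S\<^sub>2)"
    using lca_below[OF assms(1,2) lca_in_subtrees[OF assms(3,4)]] assms(5) by (simp add: cluster_def)
  then show ?thesis unfolding cluster_def by (rule leaves_subtree)
qed

lemma clusters_laminar:
  assumes "S\<^sub>1 \<noteq> {}" "S\<^sub>1 \<subseteq> V" "S\<^sub>2 \<noteq> {}" "S\<^sub>2 \<subseteq> V"
  shows "cluster T S\<^sub>1 \<subseteq> cluster T S\<^sub>2 \<or> cluster T S\<^sub>2 \<subseteq> cluster T S\<^sub>1 \<or>
    cluster T S\<^sub>1 \<inter> cluster T S\<^sub>2 = {}"
proof -
  have "lca T S\<^sub>1 \<in> subtrees (lca T S\<^sub>2) \<or> lca T S\<^sub>2 \<in> subtrees (lca T S\<^sub>1) \<or>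
      leaves (lca T S\<^sub>1) \<inter> leaves (lca T S\<^sub>2) = {}"
    using is_hc_tree lca_in_subtrees[OF assms(1,2)] lca_in_subtrees[OF assms(3,4)]
    by (intro subtrees_laminar) (auto simp: is_hc_tree_def)
  then show ?thesis unfolding cluster_def using leaves_subtree by blast
qed

lemma lca_insert_cluster:
  assumes "a \<in> V" "b \<in> V" "c \<in> V" "c \<in> cluster T {a, b}"
  shows "lca T {a, b} = lca T {a, b, c}"
proof (rule subtrees_antisym)
  show "lca T {a, b} \<in> subtrees (lca T {a, b, c})"
    using assms subset_cluster[of "{a, b, c}"] by (intro lca_below lca_in_subtrees) (auto simp: cluster_def)
  show "lca T {a, b, c} \<in> subtrees (lca T {a, b})"
    using assms subset_cluster[of "{a, b}"] by (intro lca_below lca_in_subtrees) (auto simp: cluster_def)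
qed

lemma split3_iff:
  assumes "a \<in> V" "b \<in> V" "c \<in> V"
  shows "split3 T a b c \<longleftrightarrow> c \<notin> cluster T {a, b}"
proof
  assume "split3 T a b c"
  then show "c \<notin> cluster T {a, b}"
    using lca_insert_cluster[OF assms] by (auto simp: split3_def proper_desc_def)
next
  assume c: "c \<notin> cluster T {a, b}"
  have "lca T {a, b} \<in> subtrees (lca T {a, b, c})"
    using assms subset_cluster[of "{a, b, c}"] by (intro lca_below lca_in_subtrees) (auto simp: cluster_def)
  moreover have "lca T {a, b} \<noteq> lca T {a, b, c}"
    using c assms subset_cluster[of "{a, b, c}"] by (auto simp: cluster_def)
  ultimately show "split3 T a b c" by (simp add: split3_def proper_desc_def)
qed

lemma not_split_twice:
  assumes "a \<in> V" "b \<in> V" "c \<in> V" "c \<notin> cluster T {a, b}" "b \<notin> cluster T {a, c}"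
  shows False
proof -
  have "{a, b} \<subseteq> cluster T {a, b}" "{a, c} \<subseteq> cluster T {a, c}"
    using subset_cluster[of "{a, b}"] subset_cluster[of "{a, c}"] assms(1-3) by auto
  then show False using clusters_laminar[of "{a, b}" "{a, c}"] assms by blast
qed

lemma triplet_cost_eq:
  assumes "i \<in> V" "j \<in> V" "k \<in> V"
  shows "triplet_cost w T i j k = w i j + w j k + w i k
     - (if k \<notin> cluster T {i, j} then w i j else 0)
     - (if j \<notin> cluster T {i, k} then w i k else 0)
     - (if i \<notin> cluster T {j, k} then w j k else 0)"
proof -
  have commute: "{j, i} = {i, j}" "{k, i} = {i, k}" "{k, j} = {j, k}" "{j, k, i} = {i, j, k}" by auto
  have at_most_one: "\<not> (k \<notin> cluster T {i, j} \<and> j \<notin> cluster T {i, k})"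
    "\<not> (k \<notin> cluster T {i, j} \<and> i \<notin> cluster T {j, k})"
    "\<not> (j \<notin> cluster T {i, k} \<and> i \<notin> cluster T {j, k})"
    using not_split_twice[of i j k] not_split_twice[of j i k] not_split_twice[of k i j] assms
    unfolding commute by blast+
  have star: "star3 T i j k" if "k \<in> cluster T {i, j}" "i \<in> cluster T {j, k}"
    using lca_insert_cluster[of i j k] lca_insert_cluster[of j k i] that assms
    by (simp add: star3_def insert_commute)
  note split = split3_iff[OF assms] split3_iff[OF assms(1,3,2)] split3_iff[OF assms(2,3,1)]
  consider "k \<notin> cluster T {i, j}" | "j \<notin> cluster T {i, k}" | "i \<notin> cluster T {j, k}"
    | "k \<in> cluster T {i, j}" "j \<in> cluster T {i, k}" "i \<in> cluster T {j, k}"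
    by blast
  then show ?thesis
  proof cases
    case 1
    then show ?thesis using at_most_one split by (simp add: triplet_cost_def)
  next
    case 2
    then show ?thesis using at_most_one split by (simp add: triplet_cost_def)
  next
    case 3
    then show ?thesis using at_most_one split by (simp add: triplet_cost_def)
  next
    case 4
    then show ?thesis using star split by (simp add: triplet_cost_def)
  qed
qed

text \<open>The classes of \<open>split_rel c\<close> are the leaf sets of the subtrees hanging off the path
  from the root to \<open>c\<close>.\<close>

definition split_rel :: "nat \<Rightarrow> (nat \<times> nat) set" where
  "split_rel c = {(a, b). a \<in> V - {c} \<and> b \<in> V - {c} \<and> (a = b \<or> c \<notin> cluster T {a, b})}"

lemma equiv_split_rel: "equiv (V - {c}) (split_rel c)"
proof (rule equivI)
  show "split_rel c \<subseteq> (V - {c}) \<times> (V - {c})" by (auto simp: split_rel_def)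
  show "refl_on (V - {c}) (split_rel c)" by (auto simp: refl_on_def split_rel_def)
  show "sym (split_rel c)" by (auto simp: sym_def split_rel_def insert_commute)
  show "trans (split_rel c)"
  proof (rule transI)
    fix a b d assume "(a, b) \<in> split_rel c" "(b, d) \<in> split_rel c"
    then have abd: "a \<in> V" "b \<in> V" "d \<in> V" "a \<noteq> c" "b \<noteq> c" "d \<noteq> c"
      and ab: "a = b \<or> c \<notin> cluster T {a, b}" and bd: "b = d \<or> c \<notin> cluster T {b, d}"
      by (auto simp: split_rel_def)
    have "c \<notin> cluster T {a, d}" if "a \<noteq> b" "b \<noteq> d"
    proof -
      have sub: "{a, b} \<subseteq> cluster T {a, b}" "{b, d} \<subseteq> cluster T {b, d}"
        using subset_cluster[of "{a, b}"] subset_cluster[of "{b, d}"] abd by auto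
      have "cluster T {a, b} \<subseteq> cluster T {b, d} \<or> cluster T {b, d} \<subseteq> cluster T {a, b} \<or>
          cluster T {a, b} \<inter> cluster T {b, d} = {}"
        using abd by (intro clusters_laminar) auto
      then show ?thesis
      proof (elim disjE)
        assume "cluster T {a, b} \<subseteq> cluster T {b, d}"
        then have "cluster T {a, d} \<subseteq> cluster T {b, d}" using sub abd by (intro cluster_mono) auto
        then show ?thesis using bd that by blast
      next
        assume "cluster T {b, d} \<subseteq> cluster T {a, b}"
        then have "cluster T {a, d} \<subseteq> cluster T {a, b}" using sub abd by (intro cluster_mono) auto
        then show ?thesis using ab that by blast
      qed (use sub in blast)
    qed
    then show "(a, d) \<in> split_rel c" using abd ab bd by (auto simp: split_rel_def)
  qed
qed

end

section \<open>The caterpillar\<close>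

function caterpillar :: "nat \<Rightarrow> nat \<Rightarrow> hct" where
  "caterpillar m n = (if Suc m < n then Node [Leaf m, caterpillar (Suc m) n] else Leaf m)"
  by auto
termination by (relation "measure (\<lambda>(m, n). n - m)") auto

declare caterpillar.simps [simp del]

lemma caterpillar_Node: "Suc m < n \<Longrightarrow> caterpillar m n = Node [Leaf m, caterpillar (Suc m) n]"
  by (simp add: caterpillar.simps)

lemma caterpillar_Leaf: "\<not> Suc m < n \<Longrightarrow> caterpillar m n = Leaf m"
  by (simp add: caterpillar.simps)

lemma leaves_list_caterpillar: "m < n \<Longrightarrow> leaves_list (caterpillar m n) = [m..<n]"
proof (induction m n rule: caterpillar.induct)
  case (1 m n)
  show ?case
  proof (cases "Suc m < n")
    case True
    then show ?thesis using 1 by (simp add: caterpillar_Node upt_rec[of m n])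
  next
    case False
    then show ?thesis using "1.prems" by (simp add: caterpillar_Leaf upt_rec[of m n])
  qed
qed

lemma leaves_caterpillar: "m < n \<Longrightarrow> leaves (caterpillar m n) = {m..<n}"
  by (simp add: leaves_def leaves_list_caterpillar)

lemma is_hc_tree_caterpillar: "0 < n \<Longrightarrow> is_hc_tree {0..<n} (caterpillar 0 n)"
proof -
  have "wf_hct (caterpillar m n)" for m
    by (induction m n rule: caterpillar.induct) (subst caterpillar.simps, auto)
  then show "0 < n \<Longrightarrow> ?thesis"
    by (simp add: is_hc_tree_def leaves_def leaves_list_caterpillar)
qed

lemma subtrees_caterpillar:
  "m < n \<Longrightarrow> u \<in> subtrees (caterpillar m n) \<Longrightarrow>
    \<exists>m'. m \<le> m' \<and> m' < n \<and> (u = caterpillar m' n \<or> u = Leaf m')"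
proof (induction m n rule: caterpillar.induct)
  case (1 m n)
  show ?case
  proof (cases "Suc m < n")
    case True
    then have "u = caterpillar m n \<or> u = Leaf m \<or> u \<in> subtrees (caterpillar (Suc m) n)"
      using "1.prems"(2) by (auto simp: caterpillar_Node)
    then show ?thesis
    proof (elim disjE)
      assume "u \<in> subtrees (caterpillar (Suc m) n)"
      then show ?thesis using "1.IH"[OF True True] by (meson Suc_leD)
    qed (use "1.prems" in auto)
  next
    case False
    then show ?thesis using "1.prems" by (auto simp: caterpillar_Leaf)
  qed
qed

lemma caterpillar_in_subtrees: "m \<le> m' \<Longrightarrow> m' < n \<Longrightarrow> caterpillar m' n \<in> subtrees (caterpillar m n)"
proof (induction m n rule: caterpillar.induct)
  case (1 m n)
  show ?case
  proof (cases "m = m'")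
    case False
    then have "Suc m < n" "Suc m \<le> m'" using "1.prems" by auto
    then show ?thesis using "1.IH" "1.prems"(2) by (simp add: caterpillar_Node)
  qed simp
qed

lemma cluster_caterpillar:
  assumes "a < b" "b < n"
  shows "cluster (caterpillar 0 n) {a, b} = {a..<n}"
proof -
  interpret hc_tree "{0..<n}" "caterpillar 0 n"
    using assms by unfold_locales (simp add: is_hc_tree_caterpillar)
  have ab: "{a, b} \<noteq> {}" "{a, b} \<subseteq> {0..<n}" using assms by auto
  have "lca (caterpillar 0 n) {a, b} \<in> subtrees (caterpillar a n)"
    using assms by (intro lca_below[OF ab] caterpillar_in_subtrees) (auto simp: leaves_caterpillar)
  then have below: "cluster (caterpillar 0 n) {a, b} \<subseteq> {a..<n}"
    using leaves_subtree leaves_caterpillar[of a n] assms unfolding cluster_def by fastforce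
  obtain m' where m': "m' < n"
    "lca (caterpillar 0 n) {a, b} = caterpillar m' n \<or> lca (caterpillar 0 n) {a, b} = Leaf m'"
    using subtrees_caterpillar[OF _ lca_in_subtrees[OF ab]] assms by fastforce
  have "{a, b} \<subseteq> cluster (caterpillar 0 n) {a, b}" by (rule subset_cluster[OF ab])
  then have "cluster (caterpillar 0 n) {a, b} = {m'..<n}"
    using m' assms by (auto simp: cluster_def leaves_caterpillar)
  then show ?thesis using below \<open>{a, b} \<subseteq> cluster (caterpillar 0 n) {a, b}\<close> by auto
qed

section \<open>The two costs as sums over pairs\<close>

locale hc_tree_upto = hc_tree "{0..<n}" T for n :: nat and T :: hct
begin

definition split_weight :: "(nat \<Rightarrow> nat \<Rightarrow> real) \<Rightarrow> real" where
  "split_weight w = (\<Sum>(a, b)\<in>pairs n. \<Sum>c\<in>{0..<n} - {a, b}. if c \<notin> cluster T {a, b} then w a b else 0)"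

lemma TC_eq_sum_pairs:
  "TC n w T = (\<Sum>(a, b)\<in>pairs n. \<Sum>c\<in>{0..<n} - {a, b}. if c \<in> cluster T {a, b} then w a b else 0)"
proof -
  have "TC n w T = (\<Sum>(i, j, k)\<in>triples n.
      (\<lambda>a b c. if c \<in> cluster T {a, b} then w a b else 0) i j k +
      (\<lambda>a b c. if c \<in> cluster T {a, b} then w a b else 0) i k j +
      (\<lambda>a b c. if c \<in> cluster T {a, b} then w a b else 0) j k i)"
    unfolding TC_def
    by (intro sum.cong refl) (auto simp: triples_def triplet_cost_eq)
  then show ?thesis by (simp only: sum_triples_as_pairs)
qed

lemma TC_eq_minus_split_weight:
  "TC n w T = (real n - 2) * (\<Sum>(a, b)\<in>pairs n. w a b) - split_weight w"
proof -
  have card_minus_2: "card ({0..<n} - {a, b}) = n - 2" "2 \<le> n" if "(a, b) \<in> pairs n" for a b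
    using that by (auto simp: pairs_def card_Diff_subset)
  have "(\<Sum>c\<in>{0..<n} - {a, b}. if c \<in> cluster T {a, b} then w a b else 0) =
      (real n - 2) * w a b - (\<Sum>c\<in>{0..<n} - {a, b}. if c \<notin> cluster T {a, b} then w a b else 0)"
    if "(a, b) \<in> pairs n" for a b
  proof -
    have "(\<Sum>c\<in>{0..<n} - {a, b}. if c \<in> cluster T {a, b} then w a b else 0) =
        (\<Sum>c\<in>{0..<n} - {a, b}. w a b - (if c \<notin> cluster T {a, b} then w a b else 0))"
      by (rule sum.cong) auto
    also have "\<dots> = (real n - 2) * w a b - (\<Sum>c\<in>{0..<n} - {a, b}. if c \<notin> cluster T {a, b} then w a b else 0)"
      using card_minus_2[OF that] by (simp add: sum_subtractf of_nat_diff)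
    finally show ?thesis .
  qed
  then show ?thesis
    unfolding TC_eq_sum_pairs split_weight_def sum_distrib_left sum_subtractf[symmetric]
    by (intro sum.cong) auto
qed

lemma split_weight_one_le: "split_weight (\<lambda>a b. 1) \<le> real (card (triples n))"
proof -
  have "split_weight (\<lambda>a b. 1) = (\<Sum>(i, j, k)\<in>triples n.
      (\<lambda>a b c. if c \<notin> cluster T {a, b} then 1 else 0) i j k +
      (\<lambda>a b c. if c \<notin> cluster T {a, b} then 1 else 0) i k j +
      (\<lambda>a b c. if c \<notin> cluster T {a, b} then 1 else (0::real)) j k i)"
    unfolding split_weight_def by (simp only: sum_triples_as_pairs)
  also have "\<dots> \<le> (\<Sum>t\<in>triples n. 1)"
  proof (rule sum_mono, clarify)
    fix i j k assume "(i, j, k) \<in> triples n"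
    then have ijk: "i \<in> {0..<n}" "j \<in> {0..<n}" "k \<in> {0..<n}" by (auto simp: triples_def)
    have "{j, i} = {i, j}" "{k, i} = {i, k}" "{k, j} = {j, k}" by auto
    then show "(if k \<notin> cluster T {i, j} then 1 else 0) + (if j \<notin> cluster T {i, k} then 1 else 0) +
        (if i \<notin> cluster T {j, k} then 1 else (0::real)) \<le> 1"
      using not_split_twice[OF ijk] not_split_twice[OF ijk(2,1,3)] not_split_twice[OF ijk(3,1,2)]
      by auto
  qed
  finally show ?thesis by simp
qed

lemma split_weight_by_vertex:
  "split_weight g = (\<Sum>c\<in>{0..<n}. \<Sum>(a, b)\<in>{(a, b) \<in> pairs_in ({0..<n} - {c}). (a, b) \<in> split_rel c}. g a b)"
proof -
  have "split_weight g = (\<Sum>x\<in>pairs n. \<Sum>c\<in>{0..<n}.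
      if c \<noteq> fst x \<and> c \<noteq> snd x \<and> c \<notin> cluster T {fst x, snd x} then g (fst x) (snd x) else 0)"
    unfolding split_weight_def
    by (intro sum.cong refl) (clarsimp, rule sum.mono_neutral_cong_left, auto)
  also have "\<dots> = (\<Sum>c\<in>{0..<n}. \<Sum>x\<in>pairs n.
      if c \<noteq> fst x \<and> c \<noteq> snd x \<and> c \<notin> cluster T {fst x, snd x} then g (fst x) (snd x) else 0)"
    by (rule sum.swap)
  also have "\<dots> = (\<Sum>c\<in>{0..<n}. \<Sum>(a, b)\<in>{(a, b) \<in> pairs_in ({0..<n} - {c}). (a, b) \<in> split_rel c}. g a b)"
  proof (rule sum.cong[OF refl])
    fix c assume "c \<in> {0..<n}"
    have "{(a, b) \<in> pairs_in ({0..<n} - {c}). (a, b) \<in> split_rel c} =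
        {x \<in> pairs n. c \<noteq> fst x \<and> c \<noteq> snd x \<and> c \<notin> cluster T {fst x, snd x}}"
      by (auto simp: pairs_def pairs_in_def split_rel_def)
    then show "(\<Sum>x\<in>pairs n. if c \<noteq> fst x \<and> c \<noteq> snd x \<and> c \<notin> cluster T {fst x, snd x}
          then g (fst x) (snd x) else 0) =
        (\<Sum>(a, b)\<in>{(a, b) \<in> pairs_in ({0..<n} - {c}). (a, b) \<in> split_rel c}. g a b)"
      by (simp add: sum.inter_filter case_prod_beta)
  qed
  finally show ?thesis .
qed

end

context hc_tree_upto
begin

lemma split_weight_le:
  fixes w :: "nat \<Rightarrow> nat \<Rightarrow> real" and B :: real
  assumes dense: "\<And>S. S \<subseteq> {0..<n} \<Longrightarrow> s\<^sub>0 \<le> card S \<Longrightarrow> (\<Sum>(a, b)\<in>pairs_in S. w a b) \<le> B * card (pairs_in S)"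
    and B: "0 \<le> B" and w: "\<And>a b. w a b \<le> 1"
  shows "split_weight w \<le> B * card (triples n) + real n * (s\<^sub>0 * n)"
proof -
  let ?R = "\<lambda>c. {(a, b) \<in> pairs_in ({0..<n} - {c}). (a, b) \<in> split_rel c}"
  have "split_weight w = (\<Sum>c\<in>{0..<n}. \<Sum>(a, b)\<in>?R c. w a b)"
    by (rule split_weight_by_vertex)
  also have "\<dots> \<le> (\<Sum>c\<in>{0..<n}. B * card (?R c) + s\<^sub>0 * card ({0..<n} - {c}))"
    using dense by (intro sum_mono sum_pairs_in_classes_le[OF equiv_split_rel _ _ B w]) auto
  also have "\<dots> \<le> (\<Sum>c\<in>{0..<n}. B * card (?R c) + s\<^sub>0 * n)"
    by (intro sum_mono add_left_mono) (auto intro!: mult_left_mono)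
  also have "\<dots> = B * split_weight (\<lambda>a b. 1) + real n * (s\<^sub>0 * n)"
    by (simp add: split_weight_by_vertex sum.distrib sum_distrib_left)
  also have "\<dots> \<le> B * card (triples n) + real n * (s\<^sub>0 * n)"
    using split_weight_one_le B by (simp add: mult_left_mono)
  finally show ?thesis .
qed

lemma TC_ge:
  fixes w :: "nat \<Rightarrow> nat \<Rightarrow> real" and B :: real
  assumes "\<And>S. S \<subseteq> {0..<n} \<Longrightarrow> s\<^sub>0 \<le> card S \<Longrightarrow> (\<Sum>(a, b)\<in>pairs_in S. w a b) \<le> B * card (pairs_in S)"
    and "0 \<le> B" and "\<And>a b. w a b \<le> 1"
  shows "(real n - 2) * (\<Sum>(a, b)\<in>pairs n. w a b) - B * card (triples n) - real n * (s\<^sub>0 * n) \<le> TC n w T"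
  using split_weight_le[where s\<^sub>0 = s\<^sub>0, OF assms] by (simp add: TC_eq_minus_split_weight)

lemma TC_nonneg: "(\<And>a b. 0 \<le> w a b) \<Longrightarrow> 0 \<le> TC n w T"
  unfolding TC_eq_sum_pairs by (intro sum_nonneg) (simp add: case_prod_beta sum_nonneg)

end

lemma TC_caterpillar:
  assumes "0 < n"
  shows "TC n w (caterpillar 0 n) = (\<Sum>(a, b)\<in>pairs n. w a b * real (n - 2 - a))"
proof -
  interpret hc_tree_upto n "caterpillar 0 n"
    using assms by unfold_locales (rule is_hc_tree_caterpillar)
  have "(\<Sum>c\<in>{0..<n} - {a, b}. if c \<in> cluster (caterpillar 0 n) {a, b} then w a b else 0) =
      w a b * real (n - 2 - a)" if "(a, b) \<in> pairs n" for a b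
  proof -
    have ab: "a < b" "b < n" using that by (auto simp: pairs_def)
    have "(\<Sum>c\<in>{0..<n} - {a, b}. if c \<in> cluster (caterpillar 0 n) {a, b} then w a b else 0) =
        (\<Sum>c\<in>{a..<n} - {a, b}. w a b)"
      unfolding cluster_caterpillar[OF ab] by (rule sum.mono_neutral_cong_right) auto
    also have "card ({a..<n} - {a, b}) = n - 2 - a" using ab by (simp add: card_Diff_subset)
    then have "(\<Sum>c\<in>{a..<n} - {a, b}. w a b) = w a b * real (n - 2 - a)" by simp
    finally show ?thesis .
  qed
  then show ?thesis unfolding TC_eq_sum_pairs by (intro sum.cong) auto
qed

text \<open>Every triple \<open>i < j < k\<close> is split as \<open>{j, k | i}\<close> in the caterpillar.\<close>

lemma sum_caterpillar_weights: "(\<Sum>(a, b)\<in>pairs n. real (n - 2 - a)) = 2 * real (card (triples n))"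
proof (cases "n = 0")
  case True
  then have "pairs n = {}" "triples n = {}" by (auto simp: pairs_def triples_def)
  then show ?thesis by simp
next
  case False
  interpret hc_tree_upto n "caterpillar 0 n"
    using False by unfold_locales (simp add: is_hc_tree_caterpillar)
  have "triplet_cost (\<lambda>a b. 1) (caterpillar 0 n) i j k = 2" if "(i, j, k) \<in> triples n" for i j k
    using that triplet_cost_eq[of i j k "\<lambda>a b. 1"]
      cluster_caterpillar[of i j n] cluster_caterpillar[of i k n] cluster_caterpillar[of j k n]
    by (simp add: triples_def)
  then have "TC n (\<lambda>a b. 1) (caterpillar 0 n) = (\<Sum>t\<in>triples n. 2)"
    unfolding TC_def by (intro sum.cong) auto
  then show ?thesis using TC_caterpillar[of n "\<lambda>a b. 1"] False by simp
qed

definition codegree :: "nat \<Rightarrow> (nat \<Rightarrow> nat \<Rightarrow> real) \<Rightarrow> nat \<Rightarrow> nat \<Rightarrow> real" where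
  "codegree n w a b = (\<Sum>c\<in>{0..<n} - {a, b}. w a c * w b c)"

text \<open>For a graph, the best cost of a triple is the number of its edges if it has two or three,
  and \<open>0\<close> otherwise; each pair \<open>ab\<close> is thus charged once per common neighbour \<open>c\<close>, with
  weight \<open>2/3\<close> if \<open>ab\<close> is itself an edge.\<close>

lemma BC_eq_sum_pairs:
  assumes w01: "\<And>a b. w a b = 0 \<or> w a b = 1" and sym: "\<And>a b. w a b = w b a"
  shows "BC n w = (\<Sum>(a, b)\<in>pairs n. codegree n w a b * (1 - w a b / 3))"
proof -
  have "min (w i j + w i k) (min (w i j + w j k) (w i k + w j k)) =
      w i k * w j k * (1 - w i j / 3) + w i j * w k j * (1 - w i k / 3) + w j i * w k i * (1 - w j k / 3)"
    for i j k
    using w01[of i j] w01[of i k] w01[of j k] sym[of j i] sym[of k i] sym[of k j]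
    by (elim disjE) simp_all
  then have "BC n w = (\<Sum>(i, j, k)\<in>triples n.
      (\<lambda>a b c. w a c * w b c * (1 - w a b / 3)) i j k + (\<lambda>a b c. w a c * w b c * (1 - w a b / 3)) i k j +
      (\<lambda>a b c. w a c * w b c * (1 - w a b / 3)) j k i)"
    unfolding BC_def by (simp add: case_prod_beta)
  also have "\<dots> = (\<Sum>(a, b)\<in>pairs n. codegree n w a b * (1 - w a b / 3))"
    unfolding sum_triples_as_pairs codegree_def by (simp add: sum_distrib_right case_prod_beta)
  finally show ?thesis .
qed

section \<open>Cost ratios of typical graphs\<close>

lemma cost_ratio_eq:
  fixes p K c x :: real
  assumes "0 < p" "p < 3" "0 < K" "c \<noteq> 0"
  shows "2 * p * K * x / (c * p\<^sup>2 * K * (3 - p)) = x / c * (2 / (3 * p - p\<^sup>2))"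
  using assms by (simp add: field_simps power2_eq_square)

text \<open>The relative loss in the lower bound on the cost of a tree caused by the classes of
  fewer than \<open>s\<^sub>0\<close> elements.\<close>

definition small_class_error :: "nat \<Rightarrow> nat \<Rightarrow> real \<Rightarrow> real" where
  "small_class_error n s\<^sub>0 p = real n * (real s\<^sub>0 * real n) / (p * card (triples n))"

text \<open>The gap between the factors of \<open>2 / (3p - p\<^sup>2)\<close> in \<open>rho_star_le\<close> and \<open>rho_star_ge\<close>,
  which lie on either side of \<open>1\<close>.\<close>

definition rho_deviation :: "real \<Rightarrow> real \<Rightarrow> real" where
  "rho_deviation \<eta> \<gamma> = (1 + \<eta>) / ((1 - \<eta>) * (1 - \<eta> / 2)) - (1 - 2 * \<eta> - \<gamma> / 2) / ((1 + \<eta>) * (1 + \<eta> / 2))"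

locale typical_graph =
  fixes n :: nat and p \<eta> :: real and s\<^sub>0 :: nat and w :: "nat \<Rightarrow> nat \<Rightarrow> real"
  assumes n_ge_3: "3 \<le> n" and p_pos: "0 < p" and p_le_1: "p \<le> 1"
    and eta_pos: "0 < \<eta>" and eta_le: "\<eta> \<le> 1/4"
    and w_01: "\<And>a b. w a b = 0 \<or> w a b = 1" and w_sym: "\<And>a b. w a b = w b a"
    and edges_ge: "(1 - \<eta>) * (p * card (pairs n)) \<le> (\<Sum>(a, b)\<in>pairs n. w a b)"
    and edges_le: "(\<Sum>(a, b)\<in>pairs n. w a b) \<le> (1 + \<eta>) * (p * card (pairs n))"
    and codegree_ge: "\<And>a b. (a, b) \<in> pairs n \<Longrightarrow> (1 - \<eta>) * (p\<^sup>2 * (real n - 2)) \<le> codegree n w a b"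
    and codegree_le: "\<And>a b. (a, b) \<in> pairs n \<Longrightarrow> codegree n w a b \<le> (1 + \<eta>) * (p\<^sup>2 * (real n - 2))"
    and dense_le: "\<And>S. S \<subseteq> {0..<n} \<Longrightarrow> s\<^sub>0 \<le> card S \<Longrightarrow>
      (\<Sum>(a, b)\<in>pairs_in S. w a b) \<le> (1 + \<eta>) * p * card (pairs_in S)"
    and caterpillar_le: "(\<Sum>(a, b)\<in>pairs n. w a b * real (n - 2 - a)) \<le> (1 + \<eta>) * (p * (2 * card (triples n)))"
begin

lemma w_nonneg: "0 \<le> w a b" and w_le_1: "w a b \<le> 1" and one_minus_third_nonneg: "0 \<le> 1 - w a b / 3"
  using w_01[of a b] by auto

lemma triples_nonempty: "triples n \<noteq> {}"
proof -
  have "(0, 1, 2) \<in> triples n" using n_ge_3 by (simp add: triples_def)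
  then show ?thesis by blast
qed

lemma card_triples_pos: "0 < real (card (triples n))"
  using triples_nonempty by (simp add: card_gt_0_iff)

lemma BC_estimate_eq:
  "c * (p\<^sup>2 * (real n - 2)) * (card (pairs n) - e * (p * card (pairs n)) / 3)
    = c * p\<^sup>2 * card (triples n) * (3 - e * p)"
proof -
  have "c * (p\<^sup>2 * (real n - 2)) * (card (pairs n) - e * (p * card (pairs n)) / 3)
      = c * p\<^sup>2 * ((real n - 2) * card (pairs n)) * (3 - e * p) / 3"
    by (simp add: field_simps)
  then show ?thesis by (simp flip: card_triples)
qed

lemma sum_one_minus_third: "(\<Sum>(a, b)\<in>pairs n. 1 - w a b / 3) = card (pairs n) - (\<Sum>(a, b)\<in>pairs n. w a b) / 3"
  by (simp add: sum_subtractf sum_divide_distrib case_prod_beta)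

lemma BC_ge: "(1 - \<eta>) * (1 - \<eta> / 2) * p\<^sup>2 * card (triples n) * (3 - p) \<le> BC n w"
proof -
  define q where "q = p\<^sup>2 * (real n - 2)"
  have q: "0 \<le> q" using n_ge_3 by (simp add: q_def)
  have "(1 - \<eta>) * (1 - \<eta> / 2) * p\<^sup>2 * card (triples n) * (3 - p)
      \<le> (1 - \<eta>) * p\<^sup>2 * card (triples n) * (3 - (1 + \<eta>) * p)"
  proof -
    have "(1 - \<eta> / 2) * (3 - p) \<le> 3 - (1 + \<eta>) * p"
      using eta_pos p_le_1 by (simp add: algebra_simps)
    then have "((1 - \<eta>) * p\<^sup>2 * card (triples n)) * ((1 - \<eta> / 2) * (3 - p))
        \<le> ((1 - \<eta>) * p\<^sup>2 * card (triples n)) * (3 - (1 + \<eta>) * p)"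
      using eta_le by (intro mult_left_mono) auto
    then show ?thesis by (simp add: mult_ac)
  qed
  also have "\<dots> = (1 - \<eta>) * q * (card (pairs n) - (1 + \<eta>) * (p * card (pairs n)) / 3)"
    unfolding q_def BC_estimate_eq ..
  also have "\<dots> \<le> (1 - \<eta>) * q * (\<Sum>(a, b)\<in>pairs n. 1 - w a b / 3)"
    unfolding sum_one_minus_third using edges_le eta_le q by (intro mult_left_mono) auto
  also have "\<dots> = (\<Sum>(a, b)\<in>pairs n. (1 - \<eta>) * q * (1 - w a b / 3))"
    by (simp add: sum_distrib_left case_prod_beta)
  also have "\<dots> \<le> BC n w"
    unfolding BC_eq_sum_pairs[OF w_01 w_sym] using codegree_ge one_minus_third_nonneg
    by (intro sum_mono) (auto simp: q_def intro!: mult_right_mono)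
  finally show ?thesis .
qed

lemma BC_le: "BC n w \<le> (1 + \<eta>) * (1 + \<eta> / 2) * p\<^sup>2 * card (triples n) * (3 - p)"
proof -
  define q where "q = p\<^sup>2 * (real n - 2)"
  have q: "0 \<le> q" using n_ge_3 by (simp add: q_def)
  have "BC n w \<le> (\<Sum>(a, b)\<in>pairs n. (1 + \<eta>) * q * (1 - w a b / 3))"
    unfolding BC_eq_sum_pairs[OF w_01 w_sym] using codegree_le one_minus_third_nonneg
    by (intro sum_mono) (auto simp: q_def intro!: mult_right_mono)
  also have "\<dots> = (1 + \<eta>) * q * (\<Sum>(a, b)\<in>pairs n. 1 - w a b / 3)"
    by (simp add: sum_distrib_left case_prod_beta)
  also have "\<dots> \<le> (1 + \<eta>) * q * (card (pairs n) - (1 - \<eta>) * (p * card (pairs n)) / 3)"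
    unfolding sum_one_minus_third using edges_ge eta_pos q by (intro mult_left_mono) auto
  also have "\<dots> = (1 + \<eta>) * p\<^sup>2 * card (triples n) * (3 - (1 - \<eta>) * p)"
    unfolding q_def BC_estimate_eq ..
  also have "\<dots> \<le> (1 + \<eta>) * (1 + \<eta> / 2) * p\<^sup>2 * card (triples n) * (3 - p)"
  proof -
    have "3 - (1 - \<eta>) * p \<le> (1 + \<eta> / 2) * (3 - p)"
      using eta_pos p_le_1 by (simp add: algebra_simps)
    then have "((1 + \<eta>) * p\<^sup>2 * card (triples n)) * (3 - (1 - \<eta>) * p)
        \<le> ((1 + \<eta>) * p\<^sup>2 * card (triples n)) * ((1 + \<eta> / 2) * (3 - p))"
      using eta_pos by (intro mult_left_mono) auto
    then show ?thesis by (simp add: mult_ac)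
  qed
  finally show ?thesis .
qed

lemma BC_ge_pos: "0 < (1 - \<eta>) * (1 - \<eta> / 2) * p\<^sup>2 * card (triples n) * (3 - p)"
  using eta_le p_pos p_le_1 card_triples_pos by simp

lemma BC_pos: "0 < BC n w"
  using BC_ge_pos BC_ge by linarith

lemma rho_eq: "rho n w T = ereal (TC n w T / BC n w)"
  using BC_pos by (simp add: rho_def)

lemma rho_star_le: "rho_star n w \<le> ereal ((1 + \<eta>) / ((1 - \<eta>) * (1 - \<eta> / 2)) * (2 / (3 * p - p\<^sup>2)))"
proof -
  let ?K = "real (card (triples n))"
  have "TC n w (caterpillar 0 n) \<le> 2 * p * ?K * (1 + \<eta>)"
    using caterpillar_le n_ge_3 by (simp add: TC_caterpillar mult_ac)
  then have "TC n w (caterpillar 0 n) / BC n w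
      \<le> 2 * p * ?K * (1 + \<eta>) / ((1 - \<eta>) * (1 - \<eta> / 2) * p\<^sup>2 * ?K * (3 - p))"
    using BC_ge_pos BC_ge eta_pos p_pos card_triples_pos by (intro frac_le) auto
  also have "\<dots> = (1 + \<eta>) / ((1 - \<eta>) * (1 - \<eta> / 2)) * (2 / (3 * p - p\<^sup>2))"
    using eta_le p_pos p_le_1 card_triples_pos by (intro cost_ratio_eq) auto
  finally have "rho n w (caterpillar 0 n) \<le> ereal ((1 + \<eta>) / ((1 - \<eta>) * (1 - \<eta> / 2)) * (2 / (3 * p - p\<^sup>2)))"
    by (simp add: rho_eq)
  moreover have "rho_star n w \<le> rho n w (caterpillar 0 n)"
    unfolding rho_star_def using n_ge_3 by (intro INF_lower) (simp add: is_hc_tree_caterpillar)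
  ultimately show ?thesis by simp
qed

lemma TC_ge_tree:
  assumes "is_hc_tree {0..<n} T"
  shows "2 * p * card (triples n) * (1 - 2 * \<eta> - small_class_error n s\<^sub>0 p / 2) \<le> TC n w T"
proof -
  interpret hc_tree_upto n T using assms by unfold_locales
  have "(real n - 2) * ((1 - \<eta>) * (p * card (pairs n))) = ((1 - \<eta>) * p) * ((real n - 2) * card (pairs n))"
    by (simp only: mult_ac)
  also have "\<dots> = ((1 - \<eta>) * p) * (3 * real (card (triples n)))"
    by (simp only: card_triples)
  finally have edges: "(real n - 2) * ((1 - \<eta>) * (p * card (pairs n))) = ((1 - \<eta>) * p) * (3 * real (card (triples n)))" .
  have "p * card (triples n) * small_class_error n s\<^sub>0 p = real n * (s\<^sub>0 * n)"
    using p_pos triples_nonempty by (simp add: small_class_error_def)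
  then have "2 * p * card (triples n) * (1 - 2 * \<eta> - small_class_error n s\<^sub>0 p / 2)
      = ((1 - \<eta>) * p) * (3 * real (card (triples n))) - (1 + \<eta>) * p * card (triples n) - real n * (s\<^sub>0 * n)"
    by (simp add: algebra_simps)
  also have "\<dots> \<le> (real n - 2) * (\<Sum>(a, b)\<in>pairs n. w a b) - (1 + \<eta>) * p * card (triples n)
        - real n * (s\<^sub>0 * n)"
    unfolding edges[symmetric] using edges_ge n_ge_3 by (simp add: mult_left_mono)
  also have "\<dots> \<le> TC n w T"
    using dense_le eta_pos p_pos w_le_1 by (intro TC_ge) auto
  finally show ?thesis .
qed

lemma TC_nonneg_tree: "is_hc_tree {0..<n} T \<Longrightarrow> 0 \<le> TC n w T"
  using hc_tree_upto.TC_nonneg[of n T w] w_nonneg by (simp add: hc_tree_upto_def hc_tree_def)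

lemma rho_star_ge:
  "ereal ((1 - 2 * \<eta> - small_class_error n s\<^sub>0 p / 2) / ((1 + \<eta>) * (1 + \<eta> / 2)) * (2 / (3 * p - p\<^sup>2)))
    \<le> rho_star n w"
  unfolding rho_star_def
proof (rule INF_greatest)
  fix T assume "T \<in> {T. is_hc_tree {0..<n} T}"
  then have T: "is_hc_tree {0..<n} T" by simp
  let ?K = "real (card (triples n))" and ?x = "1 - 2 * \<eta> - small_class_error n s\<^sub>0 p / 2"
  have "?x / ((1 + \<eta>) * (1 + \<eta> / 2)) * (2 / (3 * p - p\<^sup>2)) =
      2 * p * ?K * ?x / ((1 + \<eta>) * (1 + \<eta> / 2) * p\<^sup>2 * ?K * (3 - p))"
    using eta_pos p_pos p_le_1 card_triples_pos by (intro cost_ratio_eq[symmetric]) auto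
  also have "\<dots> \<le> TC n w T / BC n w"
  proof (cases "0 \<le> ?x")
    case True
    then show ?thesis
      using TC_ge_tree[OF T] BC_le BC_pos TC_nonneg_tree[OF T] p_pos card_triples_pos
      by (intro frac_le) auto
  next
    case False
    have "2 * p * ?K * ?x / ((1 + \<eta>) * (1 + \<eta> / 2) * p\<^sup>2 * ?K * (3 - p)) \<le> 0"
      using False eta_pos p_pos p_le_1 card_triples_pos
      by (intro divide_nonpos_pos mult_nonneg_nonpos) auto
    also have "0 \<le> TC n w T / BC n w"
      using BC_pos TC_nonneg_tree[OF T] by simp
    finally show ?thesis .
  qed
  finally show "ereal (?x / ((1 + \<eta>) * (1 + \<eta> / 2)) * (2 / (3 * p - p\<^sup>2))) \<le> rho n w T"
    by (simp add: rho_eq)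
qed

theorem rho_star_close:
  "ereal ((1 - rho_deviation \<eta> (small_class_error n s\<^sub>0 p)) * (2 / (3 * p - p\<^sup>2))) \<le> rho_star n w \<and>
   rho_star n w \<le> ereal ((1 + rho_deviation \<eta> (small_class_error n s\<^sub>0 p)) * (2 / (3 * p - p\<^sup>2)))"
proof -
  let ?\<gamma> = "small_class_error n s\<^sub>0 p"
  let ?U = "(1 + \<eta>) / ((1 - \<eta>) * (1 - \<eta> / 2))" and ?L = "(1 - 2 * \<eta> - ?\<gamma> / 2) / ((1 + \<eta>) * (1 + \<eta> / 2))"
  have "(1 - \<eta>) * (1 - \<eta> / 2) \<le> 1" using eta_pos eta_le by (intro mult_le_one) auto
  moreover have "0 < (1 - \<eta>) * (1 - \<eta> / 2)" using eta_le by simp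
  ultimately have U: "1 \<le> ?U" using eta_pos by simp
  have "0 \<le> ?\<gamma>" using p_pos by (simp add: small_class_error_def)
  moreover have "1 * 1 \<le> (1 + \<eta>) * (1 + \<eta> / 2)" using eta_pos by (intro mult_mono) auto
  ultimately have L: "?L \<le> 1" using eta_pos by simp
  have \<theta>: "0 < 2 / (3 * p - p\<^sup>2)"
    using p_pos p_le_1 by (simp add: power2_eq_square algebra_simps)
  have "(1 - rho_deviation \<eta> ?\<gamma>) * (2 / (3 * p - p\<^sup>2)) \<le> ?L * (2 / (3 * p - p\<^sup>2))"
    using U \<theta> by (intro mult_right_mono) (auto simp: rho_deviation_def)
  moreover have "?U * (2 / (3 * p - p\<^sup>2)) \<le> (1 + rho_deviation \<eta> ?\<gamma>) * (2 / (3 * p - p\<^sup>2))"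
    using L \<theta> by (intro mult_right_mono) (auto simp: rho_deviation_def)
  ultimately show ?thesis
    using rho_star_ge rho_star_le by (meson ereal_less_eq(3) order_trans)
qed

end

section \<open>Typical random graphs\<close>

lemma gnp_prob_eq_prob: "gnp_prob n p A = prob p (all_pairs n) A"
  unfolding gnp_prob_def prob_def expect_def subset_weight_def by (rule sum.cong) auto

lemma finite_all_pairs [simp]: "finite (all_pairs n)"
  by (rule finite_subset[of _ "Pow {0..<n}"]) (auto simp: all_pairs_def)

lemma doubleton_in_all_pairs:
  assumes "a \<noteq> b" "a < n" "b < n"
  shows "{a, b} \<in> all_pairs n"
proof (cases "a < b")
  case True
  then show ?thesis using assms unfolding all_pairs_def by blast
next
  case False
  then have "b < a" using assms(1) by simp
  moreover have "{a, b} = {b, a}" by auto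
  ultimately show ?thesis using assms unfolding all_pairs_def by blast
qed

lemma doubleton_eq_on_pairs:
  "(a, b) \<in> pairs n \<Longrightarrow> (a', b') \<in> pairs n \<Longrightarrow> {a, b} = {a', b'} \<Longrightarrow> (a, b) = (a', b')"
  by (auto simp: pairs_def doubleton_eq_iff)

lemma wt_eq_of_bool: "wt E a b = of_bool ({a, b} \<in> E)"
  by (simp add: wt_def)

lemma expect_wt: "(a, b) \<in> pairs n \<Longrightarrow> expect p (all_pairs n) (\<lambda>E. wt E a b) = p"
  unfolding wt_eq_of_bool by (intro expect_mem) (auto simp: pairs_def doubleton_in_all_pairs)

lemma indep_family_edges:
  assumes "0 \<le> p" "p \<le> 1" "Q \<subseteq> pairs n" "\<And>x. x \<in> Q \<Longrightarrow> 0 \<le> c x \<and> c x \<le> 1"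
  shows "indep_family p (all_pairs n) Q (\<lambda>x E. c x * wt E (fst x) (snd x)) (\<lambda>x. {{fst x, snd x}})"
proof
  show "finite Q" by (rule finite_subset[OF assms(3)]) simp
  show "depends_only_on (\<lambda>E. c x * wt E (fst x) (snd x)) {{fst x, snd x}}" for x
    unfolding wt_eq_of_bool by (rule depends_only_on_comp[OF depends_only_on_mem])
  show "{{fst x, snd x}} \<inter> {{fst x', snd x'}} = {}" if "x \<in> Q" "x' \<in> Q" "x \<noteq> x'" for x x'
  proof -
    have "(fst x, snd x) \<in> pairs n" "(fst x', snd x') \<in> pairs n" using that(1,2) assms(3) by auto
    then have "{fst x, snd x} \<noteq> {fst x', snd x'}"
      using doubleton_eq_on_pairs[of "fst x" "snd x" n "fst x'" "snd x'"] that(3) by (auto simp: prod_eq_iff)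
    then show ?thesis by blast
  qed
  show "0 \<le> c x * wt E (fst x) (snd x) \<and> c x * wt E (fst x) (snd x) \<le> 1" if "x \<in> Q" for x E
    using assms(4)[OF that] by (auto simp: wt_def)
qed (use assms in auto)

lemma edge_sum_chernoff:
  assumes "0 \<le> p" "p \<le> 1" "Q \<subseteq> pairs n" "\<And>x. x \<in> Q \<Longrightarrow> 0 \<le> c x \<and> c x \<le> 1" "0 < \<eta>" "\<eta> \<le> 2"
  shows "prob p (all_pairs n) (\<lambda>E. (1 + \<eta>) * (p * (\<Sum>x\<in>Q. c x)) \<le> (\<Sum>(a, b)\<in>Q. c (a, b) * wt E a b))
      \<le> exp (- (\<eta>\<^sup>2 * (p * (\<Sum>x\<in>Q. c x)) / 4))" (is ?upper)
    and "prob p (all_pairs n) (\<lambda>E. (\<Sum>(a, b)\<in>Q. c (a, b) * wt E a b) \<le> (1 - \<eta>) * (p * (\<Sum>x\<in>Q. c x)))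
      \<le> exp (- (\<eta>\<^sup>2 * (p * (\<Sum>x\<in>Q. c x)) / 4))" (is ?lower)
proof -
  interpret indep_family p "all_pairs n" Q "\<lambda>x E. c x * wt E (fst x) (snd x)" "\<lambda>x. {{fst x, snd x}}"
    by (rule indep_family_edges[OF assms(1-4)])
  have "expect p (all_pairs n) (\<lambda>E. c x * wt E (fst x) (snd x)) = c x * p" if "x \<in> Q" for x
    using that assms(3) by (auto simp: expect_cmult expect_wt)
  then have "mean = (\<Sum>x\<in>Q. c x * p)"
    unfolding mean_def by (rule sum.cong[OF refl])
  then have "mean = p * (\<Sum>x\<in>Q. c x)"
    by (simp add: sum_distrib_left mult.commute)
  moreover have "(\<Sum>x\<in>Q. c x * wt E (fst x) (snd x)) = (\<Sum>(a, b)\<in>Q. c (a, b) * wt E a b)" for E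
    by (simp add: case_prod_beta)
  ultimately show ?upper ?lower
    using chernoff_upper[OF assms(5,6)] chernoff_lower[OF assms(5,6)] by simp_all
qed

lemma codegree_chernoff:
  assumes "0 \<le> p" "p \<le> 1" "(a, b) \<in> pairs n" "0 < \<eta>" "\<eta> \<le> 2"
  shows "prob p (all_pairs n) (\<lambda>E. (1 + \<eta>) * (p\<^sup>2 * (real n - 2)) \<le> codegree n (wt E) a b)
      \<le> exp (- (\<eta>\<^sup>2 * (p\<^sup>2 * (real n - 2)) / 4))" (is ?upper)
    and "prob p (all_pairs n) (\<lambda>E. codegree n (wt E) a b \<le> (1 - \<eta>) * (p\<^sup>2 * (real n - 2)))
      \<le> exp (- (\<eta>\<^sup>2 * (p\<^sup>2 * (real n - 2)) / 4))" (is ?lower)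
proof -
  have ab: "a < b" "b < n" using assms(3) by (auto simp: pairs_def)
  interpret indep_family p "all_pairs n" "{0..<n} - {a, b}" "\<lambda>c E. wt E a c * wt E b c" "\<lambda>c. {{a, c}, {b, c}}"
  proof
    show "depends_only_on (\<lambda>E. wt E a c * wt E b c) {{a, c}, {b, c}}" for c
      unfolding depends_only_on_def wt_def by auto
    show "{{a, c}, {b, c}} \<inter> {{a, c'}, {b, c'}} = {}"
      if "c \<in> {0..<n} - {a, b}" "c' \<in> {0..<n} - {a, b}" "c \<noteq> c'" for c c'
      using that ab by (auto simp: doubleton_eq_iff)
    show "0 \<le> wt E a c * wt E b c \<and> wt E a c * wt E b c \<le> 1" for c E
      by (simp add: wt_def)
  qed (use assms in simp_all)
  have "expect p (all_pairs n) (\<lambda>E. wt E a c * wt E b c) = p\<^sup>2" if "c \<in> {0..<n} - {a, b}" for c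
  proof -
    have "expect p (all_pairs n) (\<lambda>E. wt E a c * wt E b c) =
        expect p (all_pairs n) (\<lambda>E. wt E a c) * expect p (all_pairs n) (\<lambda>E. wt E b c)"
      unfolding wt_eq_of_bool using that ab
      by (intro expect_mult_indep[OF finite_all_pairs depends_only_on_mem depends_only_on_mem])
        (auto simp: doubleton_eq_iff)
    also have "\<dots> = p * p"
      unfolding wt_eq_of_bool using that ab by (simp add: expect_mem doubleton_in_all_pairs)
    finally show ?thesis by (simp add: power2_eq_square)
  qed
  then have "mean = (\<Sum>c\<in>{0..<n} - {a, b}. p\<^sup>2)"
    unfolding mean_def by (rule sum.cong[OF refl])
  also have "\<dots> = p\<^sup>2 * (real n - 2)"
    using ab by (simp add: card_Diff_subset of_nat_diff mult.commute)
  finally have "mean = p\<^sup>2 * (real n - 2)" .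
  then show ?upper ?lower
    using chernoff_upper[OF assms(4,5)] chernoff_lower[OF assms(4,5)] by (simp_all add: codegree_def)
qed

lemma exp_le_inverse_power:
  assumes "0 < n" "real k * ln (real n) \<le> t"
  shows "exp (- t) \<le> 1 / real n ^ k"
proof -
  have "exp (- t) \<le> exp (- (real k * ln (real n)))" using assms by simp
  also have "\<dots> = 1 / real n ^ k" using assms(1) by (simp add: exp_minus exp_of_nat_mult inverse_eq_divide)
  finally show ?thesis .
qed

lemma sum_Pow_power_card: "finite A \<Longrightarrow> (\<Sum>S\<in>Pow A. (x::real) ^ card S) = (1 + x) ^ card A"
proof (induction A rule: finite_induct)
  case (insert a A)
  have "card (insert a S) = Suc (card S)" if "S \<subseteq> A" for S
  proof -
    have "finite S" "a \<notin> S" using that insert.hyps finite_subset by auto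
    then show ?thesis by simp
  qed
  then have "(\<Sum>S\<in>Pow (insert a A). x ^ card S) = (\<Sum>S\<in>Pow A. x ^ card S) + x * (\<Sum>S\<in>Pow A. x ^ card S)"
    using insert.hyps by (simp add: sum_Pow_insert sum_distrib_left)
  then show ?case using insert by (simp add: algebra_simps)
qed simp

text \<open>The union bound over all large vertex sets: a set of size \<open>k\<close> fails with probability at
  most \<open>n\<^sup>-\<^sup>3\<^sup>k\<close>.\<close>

lemma sum_nonempty_subsets_le:
  assumes "0 < n"
  shows "(\<Sum>S\<in>Pow {0..<n} - {{}}. (1 / real n ^ 3) ^ card S) \<le> 2 / real n ^ 2"
proof -
  define x where "x = 1 / real n ^ 3"
  have x: "0 \<le> x" "real n * x = 1 / real n ^ 2" using assms by (simp_all add: x_def power_def)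
  have "(\<Sum>S\<in>Pow {0..<n} - {{}}. x ^ card S) = (1 + x) ^ n - 1"
    by (simp add: sum_diff1 sum_Pow_power_card)
  also have "(1 + x) ^ n \<le> exp x ^ n"
    using x(1) by (intro power_mono) (auto simp: add.commute exp_ge_add_one_self)
  also have "exp x ^ n = exp (1 / real n ^ 2)"
    by (simp add: exp_of_nat_mult[symmetric] x(2))
  also have "exp (1 / real n ^ 2) \<le> 1 + 1 / real n ^ 2 + (1 / real n ^ 2)\<^sup>2"
    using assms by (intro exp_bound) auto
  also have "(1 / real n ^ 2)\<^sup>2 \<le> 1 / real n ^ 2"
    using power_decreasing[of 1 2 "1 / real n ^ 2"] assms by simp
  finally show ?thesis by (simp add: x_def)
qed

locale gnp_parameters =
  fixes n s\<^sub>0 :: nat and p \<eta> :: real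
  assumes n_ge_7: "7 \<le> n" and p_pos: "0 < p" and p_le_1: "p \<le> 1"
    and eta_pos: "0 < \<eta>" and eta_le: "\<eta> \<le> 1/4" and s0_pos: "1 \<le> s\<^sub>0"
    and edge_margin: "32 * ln (real n) \<le> \<eta>\<^sup>2 * p\<^sup>2 * real n"
    and set_margin: "24 * ln (real n) \<le> \<eta>\<^sup>2 * p * (real s\<^sub>0 - 1)"
begin

definition edge_count_deviates :: "nat set set \<Rightarrow> bool" where
  "edge_count_deviates E \<longleftrightarrow>
     (1 + \<eta>) * (p * card (pairs n)) \<le> (\<Sum>(a, b)\<in>pairs n. wt E a b) \<or>
     (\<Sum>(a, b)\<in>pairs n. wt E a b) \<le> (1 - \<eta>) * (p * card (pairs n))"

definition codegree_deviates :: "nat set set \<Rightarrow> bool" where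
  "codegree_deviates E \<longleftrightarrow> (\<exists>x\<in>pairs n.
     (1 + \<eta>) * (p\<^sup>2 * (real n - 2)) \<le> codegree n (wt E) (fst x) (snd x) \<or>
     codegree n (wt E) (fst x) (snd x) \<le> (1 - \<eta>) * (p\<^sup>2 * (real n - 2)))"

definition large_dense_set :: "nat set set \<Rightarrow> bool" where
  "large_dense_set E \<longleftrightarrow> (\<exists>S\<in>{S \<in> Pow {0..<n}. s\<^sub>0 \<le> card S}.
     (1 + \<eta>) * (p * card (pairs_in S)) \<le> (\<Sum>(a, b)\<in>pairs_in S. wt E a b))"

definition caterpillar_cost_high :: "nat set set \<Rightarrow> bool" where
  "caterpillar_cost_high E \<longleftrightarrow>
     (1 + \<eta>) * (p * (2 * card (triples n))) \<le> (\<Sum>(a, b)\<in>pairs n. wt E a b * real (n - 2 - a))"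

lemma n_pos: "0 < n" and ln_n_nonneg: "0 \<le> ln (real n)"
  using n_ge_7 by auto

lemma p_sq_le: "p\<^sup>2 \<le> p"
  using p_pos p_le_1 by (simp add: power2_eq_square mult_le_cancel_left1)

lemma prob_edge_count_deviates: "prob p (all_pairs n) edge_count_deviates \<le> 2 / real n ^ 2"
proof -
  have "real n \<le> real (card (pairs n))"
    using n_ge_7 by (simp add: card_pairs field_simps)
  then have "\<eta>\<^sup>2 * p\<^sup>2 * real n \<le> \<eta>\<^sup>2 * (p * card (pairs n))"
    using p_sq_le p_pos by (simp add: mult.assoc mult_mono mult_left_mono)
  then have "exp (- (\<eta>\<^sup>2 * (p * (\<Sum>x\<in>pairs n. 1)) / 4)) \<le> 1 / real n ^ 2"
    using edge_margin ln_n_nonneg by (intro exp_le_inverse_power n_pos) simp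
  then have "prob p (all_pairs n) (\<lambda>E. (1 + \<eta>) * (p * card (pairs n)) \<le> (\<Sum>(a, b)\<in>pairs n. wt E a b))
        \<le> 1 / real n ^ 2"
    and "prob p (all_pairs n) (\<lambda>E. (\<Sum>(a, b)\<in>pairs n. wt E a b) \<le> (1 - \<eta>) * (p * card (pairs n)))
        \<le> 1 / real n ^ 2"
    using edge_sum_chernoff[of p "pairs n" n "\<lambda>_. 1" \<eta>] p_pos p_le_1 eta_pos eta_le
    by simp_all
  then have "prob p (all_pairs n) edge_count_deviates \<le> 1 / real n ^ 2 + 1 / real n ^ 2"
    unfolding edge_count_deviates_def using p_pos p_le_1 by (intro prob_disj_le) auto
  then show ?thesis by simp
qed

lemma prob_codegree_deviates: "prob p (all_pairs n) codegree_deviates \<le> 1 / real n ^ 2"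
proof -
  have "4 * (\<eta>\<^sup>2 * p\<^sup>2) \<le> real n * (\<eta>\<^sup>2 * p\<^sup>2)"
    using n_ge_7 by (intro mult_right_mono) auto
  then have "\<eta>\<^sup>2 * p\<^sup>2 * real n \<le> 2 * (\<eta>\<^sup>2 * p\<^sup>2 * (real n - 2))"
    by (simp add: algebra_simps)
  then have margin: "exp (- (\<eta>\<^sup>2 * (p\<^sup>2 * (real n - 2)) / 4)) \<le> 1 / real n ^ 4"
    using edge_margin ln_n_nonneg by (intro exp_le_inverse_power n_pos) simp
  have "prob p (all_pairs n) codegree_deviates \<le> (\<Sum>x\<in>pairs n. 1 / real n ^ 4 + 1 / real n ^ 4)"
    unfolding codegree_deviates_def
  proof (rule order_trans[OF prob_ex sum_mono])
    fix x assume "x \<in> pairs n"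
    then have x: "(fst x, snd x) \<in> pairs n" by simp
    show "prob p (all_pairs n) (\<lambda>E. (1 + \<eta>) * (p\<^sup>2 * (real n - 2)) \<le> codegree n (wt E) (fst x) (snd x) \<or>
        codegree n (wt E) (fst x) (snd x) \<le> (1 - \<eta>) * (p\<^sup>2 * (real n - 2)))
      \<le> 1 / real n ^ 4 + 1 / real n ^ 4"
      using codegree_chernoff[OF _ _ x, of p \<eta>] margin p_pos p_le_1 eta_pos eta_le
      by (intro prob_disj_le) auto
  qed (use p_pos p_le_1 in auto)
  also have "\<dots> = real (card (pairs n)) * (2 / real n ^ 4)" by simp
  also have "\<dots> \<le> (real n * real n / 2) * (2 / real n ^ 4)"
    unfolding card_pairs by (intro mult_right_mono) (use n_ge_7 in auto)
  also have "\<dots> = 1 / real n ^ 2" using n_pos by (simp add: field_simps power_def)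
  finally show ?thesis .
qed

lemma prob_dense_set:
  assumes S: "S \<subseteq> {0..<n}" "s\<^sub>0 \<le> card S"
  shows "prob p (all_pairs n) (\<lambda>E. (1 + \<eta>) * (p * card (pairs_in S)) \<le> (\<Sum>(a, b)\<in>pairs_in S. wt E a b))
    \<le> (1 / real n ^ 3) ^ card S"
proof -
  have "finite S" using finite_subset[OF S(1)] by simp
  then have "real (2 * card (pairs_in S) + card S) = real (card S * card S)"
    by (simp only: card_pairs_in)
  then have pairs_S: "2 * real (card (pairs_in S)) = real (card S) * (real (card S) - 1)"
    by (simp add: algebra_simps)
  have "real (card S) * (24 * ln (real n)) \<le> real (card S) * (\<eta>\<^sup>2 * p * (real (card S) - 1))"
    using set_margin S(2) p_pos
    by (intro mult_left_mono order_trans[OF set_margin]) (auto intro!: mult_left_mono)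
  also have "\<dots> = \<eta>\<^sup>2 * p * (2 * real (card (pairs_in S)))"
    unfolding pairs_S by (simp add: algebra_simps)
  finally have "real (3 * card S) * ln (real n) \<le> \<eta>\<^sup>2 * (p * card (pairs_in S)) / 4"
    by (simp add: algebra_simps)
  then have "exp (- (\<eta>\<^sup>2 * (p * card (pairs_in S)) / 4)) \<le> 1 / real n ^ (3 * card S)"
    by (rule exp_le_inverse_power[OF n_pos])
  then show ?thesis
    using edge_sum_chernoff(1)[of p "pairs_in S" n "\<lambda>_. 1" \<eta>] S(1) pairs_in_subset_pairs
      p_pos p_le_1 eta_pos eta_le by (simp add: power_mult power_one_over)
qed

lemma prob_large_dense_set: "prob p (all_pairs n) large_dense_set \<le> 2 / real n ^ 2"
proof -
  have "prob p (all_pairs n) large_dense_set \<le> (\<Sum>S\<in>{S \<in> Pow {0..<n}. s\<^sub>0 \<le> card S}. (1 / real n ^ 3) ^ card S)"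
    unfolding large_dense_set_def
    using p_pos p_le_1 prob_dense_set by (intro order_trans[OF prob_ex sum_mono]) auto
  also have "\<dots> \<le> (\<Sum>S\<in>Pow {0..<n} - {{}}. (1 / real n ^ 3) ^ card S)"
    using s0_pos by (intro sum_mono2) auto
  also have "\<dots> \<le> 2 / real n ^ 2"
    using n_pos by (intro sum_nonempty_subsets_le) simp
  finally show ?thesis .
qed

lemma prob_caterpillar_cost_high: "prob p (all_pairs n) caterpillar_cost_high \<le> 1 / real n ^ 2"
proof -
  define c where "c x = real (n - 2 - fst x) / real n" for x :: "nat \<times> nat"
  have c: "0 \<le> c x \<and> c x \<le> 1" for x using n_pos by (simp add: c_def divide_le_eq_1)
  have sum_c: "(\<Sum>x\<in>pairs n. c x) = 2 * card (triples n) / real n"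
    using sum_caterpillar_weights[of n] by (simp add: c_def case_prod_beta flip: sum_divide_distrib)
  have "real n \<le> 2 * card (triples n) / real n"
  proof -
    have "real n * real n \<le> real n ^ 3 / 6" using n_ge_7 by (simp add: power3_eq_cube field_simps mult_right_mono)
    then show ?thesis using card_triples_ge[OF n_ge_7] n_pos by (simp add: field_simps)
  qed
  then have "p\<^sup>2 * real n \<le> p * (2 * card (triples n) / real n)"
    using p_sq_le p_pos by (intro mult_mono) auto
  then have "\<eta>\<^sup>2 * (p\<^sup>2 * real n) \<le> \<eta>\<^sup>2 * (p * (2 * card (triples n) / real n))"
    by (rule mult_left_mono) simp
  then have "\<eta>\<^sup>2 * p\<^sup>2 * real n \<le> \<eta>\<^sup>2 * (p * (\<Sum>x\<in>pairs n. c x))"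
    unfolding sum_c by (simp only: mult.assoc)
  then have margin: "exp (- (\<eta>\<^sup>2 * (p * (\<Sum>x\<in>pairs n. c x)) / 4)) \<le> 1 / real n ^ 2"
    using edge_margin ln_n_nonneg by (intro exp_le_inverse_power n_pos) simp
  have "(\<Sum>(a, b)\<in>pairs n. c (a, b) * wt E a b) = (\<Sum>(a, b)\<in>pairs n. wt E a b * real (n - 2 - a)) / real n"
    for E by (simp add: c_def sum_divide_distrib case_prod_beta mult.commute)
  moreover have "(1 + \<eta>) * (p * (\<Sum>x\<in>pairs n. c x)) = (1 + \<eta>) * (p * (2 * card (triples n))) / real n"
    by (simp add: sum_c)
  ultimately have "caterpillar_cost_high =
      (\<lambda>E. (1 + \<eta>) * (p * (\<Sum>x\<in>pairs n. c x)) \<le> (\<Sum>(a, b)\<in>pairs n. c (a, b) * wt E a b))"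
    unfolding caterpillar_cost_high_def using n_pos by (simp add: divide_le_cancel fun_eq_iff)
  then show ?thesis
    using edge_sum_chernoff(1)[of p "pairs n" n c \<eta>] c margin p_pos p_le_1 eta_pos eta_le by simp
qed

lemma typical_graph_if_not_deviating:
  assumes "\<not> edge_count_deviates E" "\<not> codegree_deviates E" "\<not> large_dense_set E"
    "\<not> caterpillar_cost_high E"
  shows "typical_graph n p \<eta> s\<^sub>0 (wt E)"
proof
  show "3 \<le> n" using n_ge_7 by simp
  show "wt E a b = 0 \<or> wt E a b = 1" "wt E a b = wt E b a" for a b
    by (simp_all add: wt_def insert_commute)
  show "(1 - \<eta>) * (p * card (pairs n)) \<le> (\<Sum>(a, b)\<in>pairs n. wt E a b)"
    "(\<Sum>(a, b)\<in>pairs n. wt E a b) \<le> (1 + \<eta>) * (p * card (pairs n))"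
    using assms(1) by (auto simp: edge_count_deviates_def)
  show "(1 - \<eta>) * (p\<^sup>2 * (real n - 2)) \<le> codegree n (wt E) a b"
    "codegree n (wt E) a b \<le> (1 + \<eta>) * (p\<^sup>2 * (real n - 2))" if "(a, b) \<in> pairs n" for a b
    using assms(2) that by (force simp: codegree_deviates_def)+
  show "(\<Sum>(a, b)\<in>pairs_in S. wt E a b) \<le> (1 + \<eta>) * p * card (pairs_in S)"
    if "S \<subseteq> {0..<n}" "s\<^sub>0 \<le> card S" for S
    using assms(3) that by (auto simp: large_dense_set_def mult.assoc)
  show "(\<Sum>(a, b)\<in>pairs n. wt E a b * real (n - 2 - a)) \<le> (1 + \<eta>) * (p * (2 * card (triples n)))"
    using assms(4) by (simp add: caterpillar_cost_high_def)
qed (use p_pos p_le_1 eta_pos eta_le in auto)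

lemma prob_typical_graph: "1 - 6 / real n ^ 2 \<le> gnp_prob n p (\<lambda>E. typical_graph n p \<eta> s\<^sub>0 (wt E))"
proof -
  let ?deviating = "\<lambda>E. edge_count_deviates E \<or> codegree_deviates E \<or> large_dense_set E \<or> caterpillar_cost_high E"
  have "prob p (all_pairs n) ?deviating \<le> 2 / real n ^ 2 + (1 / real n ^ 2 + (2 / real n ^ 2 + 1 / real n ^ 2))"
    using p_pos p_le_1 prob_edge_count_deviates prob_codegree_deviates prob_large_dense_set
      prob_caterpillar_cost_high
    by (intro prob_disj_le) auto
  then have "1 - 6 / real n ^ 2 \<le> prob p (all_pairs n) (\<lambda>E. \<not> ?deviating E)"
    using prob_compl[of "all_pairs n" p ?deviating] by simp
  also have "\<dots> \<le> prob p (all_pairs n) (\<lambda>E. typical_graph n p \<eta> s\<^sub>0 (wt E))"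
    using p_pos p_le_1 typical_graph_if_not_deviating by (intro prob_mono) auto
  finally show ?thesis by (simp add: gnp_prob_eq_prob)
qed

theorem prob_rho_star_close:
  "1 - 1 / real n < gnp_prob n p (\<lambda>E.
     ereal ((1 - rho_deviation \<eta> (small_class_error n s\<^sub>0 p)) * (2 / (3 * p - p\<^sup>2))) \<le> rho_star n (wt E) \<and>
     rho_star n (wt E) \<le> ereal ((1 + rho_deviation \<eta> (small_class_error n s\<^sub>0 p)) * (2 / (3 * p - p\<^sup>2))))"
proof -
  have "6 / real n ^ 2 < 1 / real n"
    using n_ge_7 by (simp add: field_simps power2_eq_square)
  then have "1 - 1 / real n < gnp_prob n p (\<lambda>E. typical_graph n p \<eta> s\<^sub>0 (wt E))"
    using prob_typical_graph by linarith
  also have "\<dots> \<le> gnp_prob n p (\<lambda>E.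
     ereal ((1 - rho_deviation \<eta> (small_class_error n s\<^sub>0 p)) * (2 / (3 * p - p\<^sup>2))) \<le> rho_star n (wt E) \<and>
     rho_star n (wt E) \<le> ereal ((1 + rho_deviation \<eta> (small_class_error n s\<^sub>0 p)) * (2 / (3 * p - p\<^sup>2))))"
    unfolding gnp_prob_eq_prob using p_pos p_le_1 typical_graph.rho_star_close by (intro prob_mono) auto
  finally show ?thesis .
qed

end

section \<open>Choice of the parameters\<close>

lemma edge_ratio_sq:
  assumes "3 \<le> n" "u = p / sqrt (ln (real n) / real n)"
  shows "p\<^sup>2 * real n = u\<^sup>2 * ln (real n)"
proof -
  have "0 < ln (real n)" using assms(1) by simp
  then have "u\<^sup>2 = p\<^sup>2 / (ln (real n) / real n)" using assms(2) by (simp add: power_divide)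
  then show ?thesis using assms(1) \<open>0 < ln (real n)\<close> by (simp add: field_simps)
qed

lemma ln_ge_1: "3 \<le> n \<Longrightarrow> 1 \<le> ln (real n)"
  using exp_le order_trans[of "exp 1" 3 "real n"] by (simp add: ln_ge_iff)

lemma small_class_error_le:
  assumes "7 \<le> n" "0 < p"
  shows "small_class_error n s\<^sub>0 p \<le> 12 * real s\<^sub>0 / (p * real n)"
proof -
  have "0 < real n ^ 3 / 12" using assms(1) by simp
  then have "0 < real (card (triples n))" using card_triples_ge[OF assms(1)] by linarith
  then have "small_class_error n s\<^sub>0 p \<le> real n * (real s\<^sub>0 * real n) / (p * (real n ^ 3 / 12))"
    unfolding small_class_error_def using card_triples_ge[OF assms(1)] assms
    by (intro divide_left_mono mult_left_mono mult_pos_pos) simp_all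
  also have "\<dots> = 12 * real s\<^sub>0 / (p * real n)"
    using assms by (simp add: power3_eq_cube field_simps)
  finally show ?thesis .
qed

text \<open>With \<open>u = p / \<surd>(ln n / n)\<close>, so that \<open>p\<^sup>2 n = u\<^sup>2 ln n\<close>, the accuracy \<open>\<eta> = 1 / \<surd>u\<close> and
  the threshold \<open>s\<^sub>0 \<approx> 24 u ln n / p\<close> meet both Chernoff margins, and the loss from small
  classes is \<open>O(1/u)\<close>.\<close>

lemma parameters_from_edge_ratio:
  fixes n :: nat and p u :: real
  assumes n: "7 \<le> n" and p: "0 \<le> p" "p \<le> 1" and u: "u = p / sqrt (ln n / n)" "32 \<le> u"
  defines "\<eta> \<equiv> 1 / sqrt u"
  defines "s\<^sub>0 \<equiv> nat \<lceil>24 * ln n / (\<eta>\<^sup>2 * p)\<rceil> + 1"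
  shows "gnp_parameters n s\<^sub>0 p \<eta>" and "small_class_error n s\<^sub>0 p \<le> 288 / u + 24 / u\<^sup>2"
proof -
  define l where "l = ln (real n)"
  have l: "1 \<le> l" using ln_ge_1 n by (simp add: l_def)
  have p_sq: "p\<^sup>2 * real n = u\<^sup>2 * l" using edge_ratio_sq n u(1) by (simp add: l_def)
  have p_pos: "0 < p" using p_sq u(2) l p(1) by (cases "p = 0") auto
  have eta_sq: "\<eta>\<^sup>2 = 1 / u" using u(2) by (simp add: \<eta>_def power_divide)
  have "4 \<le> sqrt u" using u(2) real_sqrt_le_iff[of 16 u] by simp
  then have eta: "0 < \<eta>" "\<eta> \<le> 1/4" using u(2) by (auto simp: \<eta>_def divide_le_eq)
  have "\<eta>\<^sup>2 * p\<^sup>2 * real n = 1 / u * (u\<^sup>2 * l)" by (simp only: mult.assoc eta_sq p_sq)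
  then have edge: "\<eta>\<^sup>2 * p\<^sup>2 * real n = u * l" using u(2) by (simp add: power2_eq_square)
  define X where "X = 24 * l / (\<eta>\<^sup>2 * p)"
  have X: "0 \<le> X" "X \<le> real s\<^sub>0 - 1" "real s\<^sub>0 \<le> X + 2"
    using l p_pos eta by (auto simp: X_def s\<^sub>0_def l_def) linarith+
  show "gnp_parameters n s\<^sub>0 p \<eta>"
  proof
    show "32 * ln (real n) \<le> \<eta>\<^sup>2 * p\<^sup>2 * real n"
      unfolding edge l_def[symmetric] using u(2) l by (intro mult_right_mono) auto
    have "24 * ln (real n) = \<eta>\<^sup>2 * p * X" using p_pos eta by (simp add: X_def l_def)
    then show "24 * ln (real n) \<le> \<eta>\<^sup>2 * p * (real s\<^sub>0 - 1)"
      using X(2) p_pos by (simp add: mult_left_mono)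
  qed (use n p_pos p eta in \<open>auto simp: s\<^sub>0_def\<close>)
  have "small_class_error n s\<^sub>0 p \<le> 12 * real s\<^sub>0 / (p * real n)"
    by (rule small_class_error_le[OF n p_pos])
  also have "\<dots> \<le> 12 * (X + 2) / (p * real n)"
    using X(3) p_pos n by (intro divide_right_mono) auto
  also have "\<dots> = 12 * X / (p * real n) + 24 / (p * real n)"
    by (simp add: add_divide_distrib algebra_simps)
  also have "12 * X / (p * real n) = 288 * l / (\<eta>\<^sup>2 * p\<^sup>2 * real n)"
    using p_pos eta n by (simp add: X_def field_simps power2_eq_square)
  also have "\<dots> = 288 / u" unfolding edge using l u(2) by simp
  also have "24 / (p * real n) \<le> 24 / u\<^sup>2"
  proof -
    have "u\<^sup>2 \<le> p\<^sup>2 * real n" using p_sq l u(2) by simp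
    also have "\<dots> \<le> p * real n" using p_pos p(2) by (intro mult_right_mono) (auto simp: power2_eq_square)
    finally show ?thesis using u(2) p_pos n by (intro divide_left_mono) auto
  qed
  finally show "small_class_error n s\<^sub>0 p \<le> 288 / u + 24 / u\<^sup>2" by simp
qed

lemma rho_deviation_tendsto_0:
  assumes u: "filterlim u at_top F" and \<gamma>: "\<forall>\<^sub>F x in F. 0 \<le> \<gamma> x \<and> \<gamma> x \<le> 288 / u x + 24 / (u x)\<^sup>2"
  shows "((\<lambda>x. rho_deviation (1 / sqrt (u x)) (\<gamma> x)) \<longlongrightarrow> 0) F"
proof -
  have "((\<lambda>x. 1 / sqrt (u x)) \<longlongrightarrow> 0) F"
    using filterlim_compose[OF sqrt_at_top u]
    by (intro tendsto_divide_0 tendsto_const filterlim_at_top_imp_at_infinity) auto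
  moreover have "(\<gamma> \<longlongrightarrow> 0) F"
  proof (rule tendsto_sandwich[where f = "\<lambda>_. 0" and h = "\<lambda>x. 288 / u x + 24 / (u x)\<^sup>2"])
    show "((\<lambda>x. 288 / u x + 24 / (u x)\<^sup>2) \<longlongrightarrow> 0) F"
      using u by (intro tendsto_add_zero tendsto_divide_0 tendsto_const filterlim_at_top_imp_at_infinity
          filterlim_pow_at_top) auto
  qed (use \<gamma> in \<open>auto elim: eventually_mono\<close>)
  ultimately have "((\<lambda>x. rho_deviation (1 / sqrt (u x)) (\<gamma> x)) \<longlongrightarrow> rho_deviation 0 0) F"
    unfolding rho_deviation_def by (intro tendsto_intros) auto
  then show ?thesis by (simp add: rho_deviation_def)
qed

theorem corollary1:
  fixes p :: "nat \<Rightarrow> real"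
  assumes "\<forall>n. 0 \<le> p n \<and> p n \<le> 1"
    and "filterlim (\<lambda>n. p n / sqrt (ln (real n) / real n)) at_top sequentially"
  shows "\<exists>\<delta> :: nat \<Rightarrow> real. \<delta> \<longlonglongrightarrow> 0 \<and>
           (\<exists>\<epsilon>>0. \<forall>\<^sub>F n in sequentially.
              gnp_prob n (p n)
                (\<lambda>E. ereal ((1 - \<delta> n) * (2 / (3 * p n - (p n)\<^sup>2))) \<le> rho_star n (wt E)
                   \<and> rho_star n (wt E) \<le> ereal ((1 + \<delta> n) * (2 / (3 * p n - (p n)\<^sup>2))))
              > 1 - real n powr (- \<epsilon>))"
proof -
  define u where "u n = p n / sqrt (ln (real n) / real n)" for n
  define \<eta> where "\<eta> n = 1 / sqrt (u n)" for n
  define s\<^sub>0 where "s\<^sub>0 n = nat \<lceil>24 * ln (real n) / ((\<eta> n)\<^sup>2 * p n)\<rceil> + 1" for n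
  define \<delta> where "\<delta> n = rho_deviation (\<eta> n) (small_class_error n (s\<^sub>0 n) (p n))" for n
  have u: "filterlim u at_top sequentially" using assms(2) unfolding u_def[abs_def] .
  have params: "\<forall>\<^sub>F n in sequentially. gnp_parameters n (s\<^sub>0 n) (p n) (\<eta> n) \<and>
      small_class_error n (s\<^sub>0 n) (p n) \<le> 288 / u n + 24 / (u n)\<^sup>2"
    using eventually_ge_at_top[of 7] u[unfolded filterlim_at_top, rule_format, of 32]
  proof eventually_elim
    case (elim n)
    then show ?case
      using parameters_from_edge_ratio[OF elim(1) _ _ refl, of "p n"] assms(1) by (simp add: u_def \<eta>_def s\<^sub>0_def)
  qed
  have "\<delta> \<longlonglongrightarrow> 0"
    unfolding \<delta>_def \<eta>_def using params assms(1)
    by (intro rho_deviation_tendsto_0[OF u]) (auto elim!: eventually_mono simp: small_class_error_def)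
  moreover have "\<forall>\<^sub>F n in sequentially. gnp_prob n (p n) (\<lambda>E.
      ereal ((1 - \<delta> n) * (2 / (3 * p n - (p n)\<^sup>2))) \<le> rho_star n (wt E) \<and>
      rho_star n (wt E) \<le> ereal ((1 + \<delta> n) * (2 / (3 * p n - (p n)\<^sup>2)))) > 1 - real n powr (- 1)"
    using params by eventually_elim (use gnp_parameters.prob_rho_star_close in \<open>simp add: \<delta>_def powr_minus_divide\<close>)
  ultimately show ?thesis by (intro exI[of _ \<delta>] conjI exI[of _ 1]) auto
qed

end
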